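(* For every $\varepsilon>0$ there exists $C>0$ such that the following holds. Let $G$ be a connected graph on vertex set $[n]$, let $R\sim G(n,\varepsilon/n)$ and $G^*=G\cup R$. Then asymptotically almost surely the diameter of $G^*$ is at most $C\log n$.
   Context: $G(n,p)$ denotes the binomial random graph on $[n]$ with each pair an edge independently with probability $p$; $G\cup R$ is the graph on $[n]$ with edge set the union of those of $G$ and $R$. Asymptotically almost surely means with probability tending to $1$ as $n\to\infty$, for an arbitrary sequence of such graphs $G=G_n$. *)

theory Defs
  imports "HOL-Probability.Probability"
begin

text \<open>Simple graphs on the vertex set [n] = {1..n}, represented by their edge sets:
  an edge is a 2-element set of vertices.\<close>

definition all_edges :: "nat \<Rightarrow> nat set set" where
  "all_edges n = {{u, v} | u v. u \<in> {1..n} \<and> v \<in> {1..n} \<and> u \<noteq> v}"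

definition is_graph :: "nat \<Rightarrow> nat set set \<Rightarrow> bool" where
  "is_graph n E \<longleftrightarrow> E \<subseteq> all_edges n"

definition is_walk :: "nat set set \<Rightarrow> nat list \<Rightarrow> bool" where
  "is_walk E xs \<longleftrightarrow> xs \<noteq> [] \<and> (\<forall>i. Suc i < length xs \<longrightarrow> {xs ! i, xs ! Suc i} \<in> E)"

definition graph_connected :: "nat \<Rightarrow> nat set set \<Rightarrow> bool" where
  "graph_connected n E \<longleftrightarrow>
     (\<forall>u\<in>{1..n}. \<forall>v\<in>{1..n}. \<exists>xs. is_walk E xs \<and> hd xs = u \<and> last xs = v)"

text \<open>Graph distance (infinite if no walk exists) and diameter.\<close>
definition graph_dist :: "nat set set \<Rightarrow> nat \<Rightarrow> nat \<Rightarrow> enat" where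
  "graph_dist E u v =
     (INF xs \<in> {xs. is_walk E xs \<and> hd xs = u \<and> last xs = v}. enat (length xs - 1))"

definition graph_diam :: "nat \<Rightarrow> nat set set \<Rightarrow> enat" where
  "graph_diam n E = (SUP u \<in> {1..n}. SUP v \<in> {1..n}. graph_dist E u v)"

definition gnp :: "nat \<Rightarrow> real \<Rightarrow> nat set set pmf" where
  "gnp n p = map_pmf (\<lambda>f. {e \<in> all_edges n. f e})
                (Pi_pmf (all_edges n) False (\<lambda>_. bernoulli_pmf p))"

end

theory Submission
  imports Defs "HOL-Real_Asymp.Real_Asymp"
begin

text \<open>Cut the connected graph \<open>G\<close> into \<open>O(n/a)\<close> pieces of at most \<open>a \<approx> 64/\<epsilon>\<close> vertices and
  \<open>G\<close>-diameter at most \<open>4a\<close>. From a vertex \<open>u\<close>, start with the pieces meeting the \<open>G\<close>-ball of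
  radius \<open>W \<approx> (384/\<epsilon>) ln n\<close> around \<open>u\<close> and explore the pieces breadth-first along the random
  edges. Each round only looks at random edges not examined before, so by a Chernoff bound the new
  layer covers at least twice as many vertices as the last one (up to \<open>n/128\<close>) unless an event of
  probability at most \<open>n\<^sup>-\<^sup>3\<close> occurs. After \<open>log\<^sub>2 n + 65\<close> rounds the explorations from
  any two vertices each cover more than half of the vertices, hence meet, which yields a path of
  length \<open>O(a log n)\<close> in \<open>G \<union> R\<close>.\<close>

section \<open>Random edge subsets\<close>

definition random_edges :: "nat set set \<Rightarrow> real \<Rightarrow> nat set set pmf" where
  "random_edges S p = map_pmf (\<lambda>f. {e \<in> S. f e}) (Pi_pmf S False (\<lambda>_. bernoulli_pmf p))"

lemma gnp_eq_random_edges: "gnp n p = random_edges (all_edges n) p"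
  by (simp add: gnp_def random_edges_def)

lemma finite_all_edges: "finite (all_edges n)"
proof -
  have "all_edges n \<subseteq> Pow {1..n}" by (auto simp: all_edges_def)
  thus ?thesis by (rule finite_subset) auto
qed

lemma set_pmf_random_edges: "R \<in> set_pmf (random_edges S p) \<Longrightarrow> R \<subseteq> S"
  by (auto simp: random_edges_def)

lemma random_edges_Un:
  assumes "finite X" "finite Y" "X \<inter> Y = {}"
  shows "random_edges (X \<union> Y) p =
           map_pmf (\<lambda>(A, B). A \<union> B) (pair_pmf (random_edges X p) (random_edges Y p))"
proof -
  let ?Bern = "\<lambda>X. Pi_pmf X False (\<lambda>_. bernoulli_pmf p)"
  have "random_edges (X \<union> Y) p =
          map_pmf (\<lambda>(f, g). {e \<in> X \<union> Y. if e \<in> X then f e else g e}) (pair_pmf (?Bern X) (?Bern Y))"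
    unfolding random_edges_def using assms
    by (subst Pi_pmf_union) (auto simp: map_pmf_comp case_prod_unfold)
  also have "\<dots> = map_pmf (\<lambda>(f, g). {e \<in> X. f e} \<union> {e \<in> Y. g e}) (pair_pmf (?Bern X) (?Bern Y))"
    using assms(3) by (intro map_pmf_cong refl) auto
  also have "\<dots> = map_pmf (\<lambda>(A, B). A \<union> B) (pair_pmf (random_edges X p) (random_edges Y p))"
    unfolding random_edges_def map_pair[symmetric] map_pmf_comp by (simp add: case_prod_unfold)
  finally show ?thesis .
qed

lemma prob_random_edges_split:
  assumes "finite S"
  shows "measure_pmf.prob (random_edges S p) {R. \<phi> (R \<inter> X) \<and> \<psi> (R - X)} =
           measure_pmf.prob (random_edges (S \<inter> X) p) {A. \<phi> A} *
           measure_pmf.prob (random_edges (S - X) p) {B. \<psi> B}"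
proof -
  let ?M = "pair_pmf (random_edges (S \<inter> X) p) (random_edges (S - X) p)"
  let ?E = "{R. \<phi> (R \<inter> X) \<and> \<psi> (R - X)}"
  have S: "S = (S \<inter> X) \<union> (S - X)" by auto
  have "random_edges S p = map_pmf (\<lambda>(A, B). A \<union> B) ?M"
    using assms by (subst S, subst random_edges_Un) auto
  hence "measure_pmf.prob (random_edges S p) ?E = measure_pmf.prob ?M ((\<lambda>(A, B). A \<union> B) -` ?E)"
    by simp
  also have "\<dots> = measure_pmf.prob ?M ((\<lambda>(A, B). A \<union> B) -` ?E \<inter> set_pmf ?M)"
    by (simp only: measure_Int_set_pmf)
  also have "(\<lambda>(A, B). A \<union> B) -` ?E \<inter> set_pmf ?M =
      ({A. \<phi> A} \<inter> set_pmf (random_edges (S \<inter> X) p)) \<times> ({B. \<psi> B} \<inter> set_pmf (random_edges (S - X) p))"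
  proof -
    have "(A \<union> B) \<inter> X = A" "(A \<union> B) - X = B"
      if "A \<in> set_pmf (random_edges (S \<inter> X) p)" "B \<in> set_pmf (random_edges (S - X) p)" for A B
      using set_pmf_random_edges[OF that(1)] set_pmf_random_edges[OF that(2)] by auto
    thus ?thesis by auto
  qed
  also have "measure_pmf.prob ?M \<dots> =
      measure_pmf.prob (random_edges (S \<inter> X) p) ({A. \<phi> A} \<inter> set_pmf (random_edges (S \<inter> X) p)) *
      measure_pmf.prob (random_edges (S - X) p) ({B. \<psi> B} \<inter> set_pmf (random_edges (S - X) p))"
    by (rule measure_pmf_prob_product) (auto intro: countable_subset)
  finally show ?thesis by (simp add: measure_Int_set_pmf)
qed

lemma prob_random_edges_indep:
  assumes "finite S"
  shows "measure_pmf.prob (random_edges S p) {R. \<phi> (R \<inter> X) \<and> \<psi> (R - X)} =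
           measure_pmf.prob (random_edges S p) {R. \<phi> (R \<inter> X)} *
           measure_pmf.prob (random_edges S p) {R. \<psi> (R - X)}"
  using prob_random_edges_split[OF assms, where \<phi> = \<phi> and X = X and \<psi> = \<psi>]
    prob_random_edges_split[OF assms, where \<phi> = \<phi> and X = X and \<psi> = "\<lambda>_. True"]
    prob_random_edges_split[OF assms, where \<phi> = "\<lambda>_. True" and X = X and \<psi> = \<psi>]
  by simp

lemma prob_random_edges_avoid:
  assumes "finite S" "F \<subseteq> S" "0 \<le> p" "p \<le> 1"
  shows "measure_pmf.prob (random_edges S p) {R. R \<inter> F = {}} = (1 - p) ^ card F"
proof -
  have "{f. {e \<in> S. f e} \<inter> F = {}} = Pi S (\<lambda>e. if e \<in> F then {False} else UNIV)"
    using assms(2) by (auto simp: Pi_def)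
  hence "measure_pmf.prob (random_edges S p) {R. R \<inter> F = {}} =
           (\<Prod>e\<in>S. measure_pmf.prob (bernoulli_pmf p) (if e \<in> F then {False} else UNIV))"
    using measure_Pi_pmf_Pi[OF assms(1)] by (simp add: random_edges_def)
  also have "\<dots> = (\<Prod>e\<in>S. if e \<in> F then 1 - p else 1)"
    using assms(3,4) by (intro prod.cong refl) (auto simp: measure_pmf_single)
  also have "\<dots> = (1 - p) ^ card F"
    using assms(1,2)
    by (subst prod.If_cases) (auto simp: Int_absorb1 Int_absorb2 intro!: prod.neutral)
  finally show ?thesis .
qed

lemma prob_random_edges_hit:
  assumes "finite S" "F \<subseteq> S" "0 \<le> p" "p \<le> 1"
  shows "measure_pmf.prob (random_edges S p) {R. R \<inter> F \<noteq> {}} = 1 - (1 - p) ^ card F"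
proof -
  have "{R. R \<inter> F \<noteq> {}} = UNIV - {R. R \<inter> F = {}}" by auto
  thus ?thesis
    using prob_random_edges_avoid[OF assms] measure_pmf.prob_compl[of "{R. R \<inter> F = {}}"] by simp
qed

lemma hit_weight_bounds:
  fixes p s :: real
  assumes "0 \<le> p" "p \<le> 1" "0 \<le> s"
  shows "0 \<le> (1 - (1 - p) ^ k) * (1 - exp (- s))" "(1 - (1 - p) ^ k) * (1 - exp (- s)) \<le> 1"
proof -
  have "0 \<le> (1 - p) ^ k" "(1 - p) ^ k \<le> 1" using assms by (auto intro: power_le_one)
  moreover have "0 \<le> 1 - exp (- s)" "1 - exp (- s) \<le> 1" using assms(3) by auto
  ultimately show "0 \<le> (1 - (1 - p) ^ k) * (1 - exp (- s))"
    and "(1 - (1 - p) ^ k) * (1 - exp (- s)) \<le> 1"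
    by (simp_all add: mult_le_one)
qed

text \<open>A Chernoff bound: the blocks \<open>F Q\<close> are disjoint, so the events of meeting them are
  independent.\<close>

lemma prob_hit_weight_less:
  fixes F :: "'a \<Rightarrow> nat set set" and w :: "'a \<Rightarrow> real"
  assumes "finite S" "finite Os" "\<And>Q. Q \<in> Os \<Longrightarrow> F Q \<subseteq> S" "disjoint_family_on F Os"
    "0 \<le> p" "p \<le> 1" "t \<ge> 0" "\<And>Q. Q \<in> Os \<Longrightarrow> w Q \<ge> 0"
  shows "measure_pmf.prob (random_edges S p)
           {R. (\<Sum>Q\<in>Os. if R \<inter> F Q \<noteq> {} then w Q else 0) < \<theta>}
         \<le> exp (t * \<theta>) * (\<Prod>Q\<in>Os. 1 - (1 - (1 - p) ^ card (F Q)) * (1 - exp (- (t * w Q))))"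
  using assms(2,3,4,8)
proof (induction Os arbitrary: \<theta> rule: finite_induct)
  case empty
  thus ?case using assms(7) by (cases "\<theta> > 0") auto
next
  case (insert Q0 Os)
  let ?M = "random_edges S p"
  define X where "X = F Q0"
  define Z where "Z = (\<lambda>R. \<Sum>Q\<in>Os. if R \<inter> F Q \<noteq> {} then w Q else 0)"
  define B where "B = (\<Prod>Q\<in>Os. 1 - (1 - (1 - p) ^ card (F Q)) * (1 - exp (- (t * w Q))))"
  define q where "q = 1 - (1 - p) ^ card X"
  have Z_Diff: "Z (R - X) = Z R" for R
    unfolding Z_def
  proof (intro sum.cong refl)
    fix Q assume "Q \<in> Os"
    hence "F Q \<inter> X = {}"
      using insert.prems(2) insert.hyps unfolding X_def disjoint_family_on_def by (metis insertCI)
    hence "(R - X) \<inter> F Q = R \<inter> F Q" by auto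
    thus "(if (R - X) \<inter> F Q \<noteq> {} then w Q else 0) = (if R \<inter> F Q \<noteq> {} then w Q else 0)"
      by simp
  qed
  have IH: "measure_pmf.prob ?M {R. Z R < \<theta>'} \<le> exp (t * \<theta>') * B" for \<theta>'
    unfolding Z_def B_def using insert.prems
    by (intro insert.IH) (auto simp: disjoint_family_on_def)
  have "0 \<le> q" "q \<le> 1" unfolding q_def using assms(5,6) by (auto intro: power_le_one)
  have XS: "X \<subseteq> S" unfolding X_def using insert.prems(1) by auto
  have split: "{R. (\<Sum>Q\<in>insert Q0 Os. if R \<inter> F Q \<noteq> {} then w Q else 0) < \<theta>} =
        {R. R \<inter> X \<noteq> {} \<and> Z (R - X) < \<theta> - w Q0} \<union> {R. R \<inter> X = {} \<and> Z (R - X) < \<theta>}"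
    using insert.hyps unfolding Z_Diff by (auto simp: X_def Z_def)
  have "measure_pmf.prob ?M {R. R \<inter> X \<noteq> {} \<and> Z (R - X) < \<theta> - w Q0} =
          q * measure_pmf.prob ?M {R. Z R < \<theta> - w Q0}"
    using prob_random_edges_indep[OF assms(1), where \<phi> = "\<lambda>A. A \<noteq> {}" and X = X
        and \<psi> = "\<lambda>B. Z B < \<theta> - w Q0"]
      prob_random_edges_hit[OF assms(1) XS assms(5,6)] unfolding Z_Diff q_def by simp
  moreover have "measure_pmf.prob ?M {R. R \<inter> X = {} \<and> Z (R - X) < \<theta>} =
          (1 - q) * measure_pmf.prob ?M {R. Z R < \<theta>}"
    using prob_random_edges_indep[OF assms(1), where \<phi> = "\<lambda>A. A = {}" and X = X
        and \<psi> = "\<lambda>B. Z B < \<theta>"]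
      prob_random_edges_avoid[OF assms(1) XS assms(5,6)] unfolding Z_Diff q_def by simp
  ultimately have "measure_pmf.prob ?M {R. (\<Sum>Q\<in>insert Q0 Os. if R \<inter> F Q \<noteq> {} then w Q else 0) < \<theta>}
      = q * measure_pmf.prob ?M {R. Z R < \<theta> - w Q0} + (1 - q) * measure_pmf.prob ?M {R. Z R < \<theta>}"
    unfolding split by (subst measure_pmf.finite_measure_Union) auto
  also have "\<dots> \<le> q * (exp (t * (\<theta> - w Q0)) * B) + (1 - q) * (exp (t * \<theta>) * B)"
    using IH \<open>0 \<le> q\<close> \<open>q \<le> 1\<close> by (intro add_mono mult_left_mono) auto
  also have "\<dots> = exp (t * \<theta>) * (B * (1 - q * (1 - exp (- (t * w Q0)))))"
    by (simp add: algebra_simps exp_diff exp_minus field_simps)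
  also have "B * (1 - q * (1 - exp (- (t * w Q0)))) =
      (\<Prod>Q\<in>insert Q0 Os. 1 - (1 - (1 - p) ^ card (F Q)) * (1 - exp (- (t * w Q))))"
    using insert.hyps by (simp add: B_def q_def X_def mult.commute)
  finally show ?case .
qed


lemma mult_one_minus_exp_le:
  fixes y z :: real
  assumes "0 \<le> z" "z \<le> 1" "0 \<le> y"
  shows "z * (1 - exp (- y)) \<le> 1 - exp (- (y * z))"
proof -
  have "exp ((1 - z) *\<^sub>R 0 + z *\<^sub>R (- y)) \<le> (1 - z) * exp 0 + z * exp (- y)"
    using assms by (intro convex_onD[OF exp_convex]) auto
  thus ?thesis by (simp add: algebra_simps)
qed

lemma exp_minus_one_le_half: "exp (-1::real) \<le> 1/2"
proof -
  have "2 \<le> exp (1::real)" using exp_ge_add_one_self[of 1] by simp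
  thus ?thesis by (simp add: exp_minus field_simps)
qed

lemma one_minus_exp_ge_half:
  fixes y :: real
  assumes "0 \<le> y" "y \<le> 1"
  shows "y / 2 \<le> 1 - exp (- y)"
proof -
  have "y * (1/2) \<le> y * (1 - exp (- 1))"
    using assms exp_minus_one_le_half by (intro mult_left_mono) auto
  also have "\<dots> \<le> 1 - exp (- y)" using mult_one_minus_exp_le[of y 1] assms by simp
  finally show ?thesis by simp
qed

lemma one_minus_exp_ge_three_quarters:
  fixes s :: real
  assumes "0 \<le> s" "s \<le> 1/2"
  shows "3/4 * s \<le> 1 - exp (- s)"
proof -
  have pos: "0 < 1 + s + s^2/2" using assms by (simp add: add_pos_nonneg)
  have "s * s \<le> s * (1/2)" "s * s * s \<le> s * s * (1/2)" using assms by (intro mult_left_mono; simp)+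
  moreover have "(1 + s + s^2/2) * (1 - 3/4 * s) = 1 + s / 4 - (s * s) / 4 - 3 / 8 * (s * s * s)"
    by (simp add: algebra_simps power2_eq_square)
  ultimately have "1 \<le> (1 + s + s^2/2) * (1 - 3/4 * s)" using assms by linarith
  hence "1 / (1 + s + s^2/2) \<le> 1 - 3/4 * s" using pos by (simp add: field_simps)
  moreover have "exp (- s) \<le> 1 / (1 + s + s^2/2)"
    using exp_lower_Taylor_quadratic[of s] assms pos by (simp add: exp_minus field_simps)
  ultimately show ?thesis by linarith
qed

lemma hit_weight_lower:
  fixes p :: real and a w c :: nat
  assumes "0 \<le> p" "p \<le> 1" "0 < a" "c \<le> a"
  shows "(1 - exp (- (p * w * a))) * (3 / (8 * a^2)) * c^2
           \<le> (1 - (1 - p) ^ (w * c)) * (1 - exp (- (c / (2 * a))))"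
proof -
  define y where "y = p * w * a"
  have y: "0 \<le> y" using assms by (simp add: y_def)
  have "(1 - p) ^ (w * c) \<le> exp (- p) ^ (w * c)"
    using assms exp_ge_add_one_self[of "- p"] by (intro power_mono) auto
  also have "\<dots> = exp (- (y * (c / a)))"
    using assms by (simp add: exp_of_nat_mult[symmetric] y_def field_simps)
  finally have hit: "1 - exp (- (y * (c / a))) \<le> 1 - (1 - p) ^ (w * c)" by simp
  have "c / a * (1 - exp (- y)) \<le> 1 - exp (- (y * (c / a)))"
    using assms y by (intro mult_one_minus_exp_le) auto
  moreover have "3/4 * (c / (2 * a)) \<le> 1 - exp (- (c / (2 * a)))"
    using assms by (intro one_minus_exp_ge_three_quarters) (auto simp: field_simps)
  moreover have "0 \<le> c / a * (1 - exp (- y))" using y by simp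
  ultimately have "(c / a * (1 - exp (- y))) * (3/4 * (c / (2 * a)))
                     \<le> (1 - (1 - p) ^ (w * c)) * (1 - exp (- (c / (2 * a))))"
    using hit by (intro mult_mono) auto
  moreover have "(c / a * (1 - exp (- y))) * (3/4 * (c / (2 * a))) =
                   (1 - exp (- y)) * (3 / (8 * a^2)) * c^2"
    using assms by (simp add: field_simps power2_eq_square)
  ultimately show ?thesis by (simp add: y_def)
qed

lemma sum_card_squares_lower:
  fixes Os :: "'a set set" and n a :: nat
  assumes "finite Os" "disjoint Os" "\<And>Q. Q \<in> Os \<Longrightarrow> finite Q" "0 < n" "0 < a"
    "real n / 2 \<le> card (\<Union>Os)" "real (card Os) \<le> 2 * real n / a"
  shows "real n * a / 8 \<le> (\<Sum>Q\<in>Os. (real (card Q))^2)"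
proof -
  have "(\<Sum>Q\<in>Os. real (card Q)) = card (\<Union>Os)"
    using card_Union_disjoint[of Os] assms(2,3) by (simp add: of_nat_sum)
  hence "(real n / 2)^2 \<le> (\<Sum>Q\<in>Os. real (card Q))^2"
    using assms(6) by (intro power_mono) auto
  also have "\<dots> \<le> (\<Sum>Q\<in>Os. (real (card Q))^2) * card Os"
    by (rule sum_squared_le_sum_of_squares)
  also have "\<dots> \<le> (\<Sum>Q\<in>Os. (real (card Q))^2) * (2 * real n / a)"
    using assms(7) by (intro mult_left_mono sum_nonneg) auto
  finally have "real n * (real n * a) \<le> real n * ((\<Sum>Q\<in>Os. (real (card Q))^2) * 8)"
    using assms(5) by (simp add: field_simps power2_eq_square)
  thus ?thesis using assms(4) by (simp add: mult_le_cancel_left)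
qed

lemma hit_exponent_bound:
  fixes \<epsilon> y w :: real and n a :: nat
  assumes "0 < a" "64 \<le> \<epsilon> * a" "0 \<le> y" "0 \<le> w" "y * n = \<epsilon> * w * a"
  shows "min (2 * w) (n / 128) / (2 * a) - 3 * (1 - exp (- y)) * n / (64 * a)
           \<le> - min (\<epsilon> * w / 128) (n / (64 * a))"
proof (cases "y \<le> 1")
  case True
  have "3 * (y / 2) * n / (64 * a) \<le> 3 * (1 - exp (- y)) * n / (64 * a)"
    using one_minus_exp_ge_half[OF assms(3) True] by (intro divide_right_mono mult_right_mono) auto
  moreover have "3 * (y / 2) * n / (64 * a) = 3 * \<epsilon> * w / 128"
    using assms(1,5) by (simp add: field_simps)
  moreover have "min (2 * w) (n / 128) / (2 * a) \<le> \<epsilon> * w / 64"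
  proof -
    have "min (2 * w) (n / 128) / (2 * a) \<le> w * (1 / a)" using assms(1) by (simp add: field_simps)
    also have "\<dots> \<le> w * (\<epsilon> / 64)" using assms by (intro mult_left_mono) (auto simp: field_simps)
    finally show ?thesis by (simp add: mult.commute)
  qed
  ultimately show ?thesis by linarith
next
  case False
  have "exp (- y) \<le> exp (-1)" using False by simp
  hence "1/2 \<le> 1 - exp (- y)" using exp_minus_one_le_half by linarith
  hence "3 * (1/2) * n / (64 * a) \<le> 3 * (1 - exp (- y)) * n / (64 * a)"
    using assms(1) by (intro divide_right_mono mult_right_mono) auto
  moreover have "min (2 * w) (n / 128) / (2 * a) \<le> n / (256 * a)"
    using assms(1) by (simp add: field_simps)
  moreover have "3 * (1/2) * n / (64 * a) = 6 * (n / (256 * a))" "n / (64 * a) = 4 * (n / (256 * a))"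
    by (simp_all add: field_simps)
  moreover have "min (\<epsilon> * w / 128) (n / (64 * a)) \<le> n / (64 * a)" "0 \<le> n / (256 * a)"
    by simp_all
  ultimately show ?thesis by linarith
qed

lemma sum_hit_weights_lower:
  fixes Os :: "'a set set" and n a w :: nat and p :: real
  assumes "finite Os" "disjoint Os" "\<And>Q. Q \<in> Os \<Longrightarrow> finite Q" "0 < n" "0 < a"
    "\<forall>Q\<in>Os. card Q \<le> a" "real n / 2 \<le> card (\<Union>Os)" "real (card Os) \<le> 2 * real n / a"
    "0 \<le> p" "p \<le> 1"
  shows "3 * (1 - exp (- (p * w * a))) * n / (64 * a)
           \<le> (\<Sum>Q\<in>Os. (1 - (1 - p) ^ (w * card Q)) * (1 - exp (- (card Q / (2 * a)))))"
proof -
  let ?c = "(1 - exp (- (p * w * a))) * (3 / (8 * a^2))"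
  have "0 \<le> ?c" using assms(9) by simp
  have "3 * (1 - exp (- (p * w * a))) * n / (64 * a) = ?c * (real n * a / 8)"
    using assms(5) by (simp add: field_simps power2_eq_square)
  also have "\<dots> \<le> ?c * (\<Sum>Q\<in>Os. (real (card Q))^2)"
    using sum_card_squares_lower[OF assms(1-5,7,8)] \<open>0 \<le> ?c\<close> by (rule mult_left_mono)
  also have "\<dots> = (\<Sum>Q\<in>Os. ?c * (real (card Q))^2)" by (simp add: sum_distrib_left)
  also have "\<dots> \<le> (\<Sum>Q\<in>Os. (1 - (1 - p) ^ (w * card Q)) * (1 - exp (- (card Q / (2 * a)))))"
    using hit_weight_lower[OF assms(9,10,5)] assms(6) by (intro sum_mono) auto
  finally show ?thesis .
qed

lemma prob_layer_hits_few_pieces: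
  fixes n a :: nat and \<epsilon> :: real and L :: "nat set" and Os :: "nat set set"
  assumes n: "0 < n" and a: "0 < a" and eps: "0 < \<epsilon>" "64 \<le> \<epsilon> * a" "\<epsilon> \<le> n"
    and L: "L \<subseteq> {1..n}" and Os: "\<Union>Os \<subseteq> {1..n}" "L \<inter> \<Union>Os = {}" "disjoint Os"
    and small: "\<forall>Q\<in>Os. card Q \<le> a"
    and big: "real n / 2 \<le> card (\<Union>Os)" and few: "real (card Os) \<le> 2 * real n / a"
  shows "measure_pmf.prob (gnp n (\<epsilon> / n))
           {R. real (card (\<Union>{Q\<in>Os. \<exists>x\<in>L. \<exists>y\<in>Q. {x, y} \<in> R})) < min (2 * real (card L)) (n / 128)}
         \<le> exp (- min (\<epsilon> * card L / 128) (n / (64 * a)))"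
proof -
  define p where "p = \<epsilon> / n"
  define w where "w = card L"
  define \<theta> where "\<theta> = min (2 * real w) (n / 128)"
  define F where "F = (\<lambda>Q. (\<lambda>(x, y). {x, y :: nat}) ` (L \<times> Q))"
  define x where "x = (\<lambda>Q. (1 - (1 - p) ^ card (F Q)) * (1 - exp (- (card Q / (2 * a)))))"
  have p: "0 \<le> p" "p \<le> 1" using eps n by (auto simp: p_def field_simps)
  have finL: "finite L" using L finite_subset by blast
  have finU: "finite (\<Union>Os)" using Os finite_subset by blast
  hence finOs: "finite Os" and finQ: "\<And>Q. Q \<in> Os \<Longrightarrow> finite Q"
    by (auto intro: finite_UnionD rev_finite_subset)
  have QL: "Q \<inter> L = {}" if "Q \<in> Os" for Q using Os(2) that by auto
  have F_edges: "F Q \<subseteq> all_edges n" if "Q \<in> Os" for Q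
    using that L Os QL unfolding F_def all_edges_def by fastforce
  have card_F: "card (F Q) = w * card Q" if "Q \<in> Os" for Q
  proof -
    have "inj_on (\<lambda>(x, y). {x, y :: nat}) (L \<times> Q)"
      using QL[OF that] unfolding inj_on_def by (auto simp: doubleton_eq_iff)
    thus ?thesis using finL finQ[OF that] by (simp add: F_def w_def card_image card_cartesian_product)
  qed
  have F_disjoint: "disjoint_family_on F Os"
    unfolding disjoint_family_on_def
  proof (intro ballI impI)
    fix Q Q' assume "Q \<in> Os" "Q' \<in> Os" "Q \<noteq> Q'"
    hence "Q \<inter> Q' = {}" "Q \<inter> L = {}" "Q' \<inter> L = {}" using Os(3) QL by (auto simp: disjoint_def)
    thus "F Q \<inter> F Q' = {}" unfolding F_def by (auto simp: doubleton_eq_iff)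
  qed
  have card_hit: "real (card (\<Union>{Q\<in>Os. \<exists>x\<in>L. \<exists>y\<in>Q. {x, y} \<in> R})) =
                    (\<Sum>Q\<in>Os. if R \<inter> F Q \<noteq> {} then real (card Q) else 0)" for R
  proof -
    have hit: "(\<exists>x\<in>L. \<exists>y\<in>Q. {x, y} \<in> R) \<longleftrightarrow> R \<inter> F Q \<noteq> {}" for Q
      unfolding F_def by auto
    have "card (\<Union>{Q\<in>Os. \<exists>x\<in>L. \<exists>y\<in>Q. {x, y} \<in> R}) = sum card {Q\<in>Os. \<exists>x\<in>L. \<exists>y\<in>Q. {x, y} \<in> R}"
      by (rule card_Union_disjoint) (use Os(3) finQ in \<open>auto simp: pairwise_def\<close>)
    also have "\<dots> = (\<Sum>Q\<in>Os. if R \<inter> F Q \<noteq> {} then card Q else 0)"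
      using finOs by (simp add: sum.inter_filter hit)
    finally show ?thesis by (simp add: of_nat_sum if_distrib cong: if_cong)
  qed
  have "measure_pmf.prob (gnp n (\<epsilon> / n))
          {R. real (card (\<Union>{Q\<in>Os. \<exists>x\<in>L. \<exists>y\<in>Q. {x, y} \<in> R})) < \<theta>} =
        measure_pmf.prob (random_edges (all_edges n) p)
          {R. (\<Sum>Q\<in>Os. if R \<inter> F Q \<noteq> {} then real (card Q) else 0) < \<theta>}"
    unfolding card_hit gnp_eq_random_edges p_def ..
  also have "\<dots> \<le> exp (\<theta> / (2 * a)) * (\<Prod>Q\<in>Os. 1 - x Q)"
    using prob_hit_weight_less[OF finite_all_edges finOs F_edges F_disjoint p, of "1 / (2 * a)"]
    by (simp add: x_def)
  also have "(\<Prod>Q\<in>Os. 1 - x Q) \<le> (\<Prod>Q\<in>Os. exp (- x Q))"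
  proof (rule prod_mono)
    fix Q assume "Q \<in> Os"
    have "x Q \<le> 1" using hit_weight_bounds(2)[OF p] by (simp add: x_def)
    thus "0 \<le> 1 - x Q \<and> 1 - x Q \<le> exp (- x Q)" using exp_ge_add_one_self[of "- x Q"] by simp
  qed
  also have "\<dots> = exp (- (\<Sum>Q\<in>Os. x Q))" by (simp only: sum_negf[symmetric] exp_sum[OF finOs])
  also have "\<dots> \<le> exp (- (3 * (1 - exp (- (p * w * a))) * n / (64 * a)))"
    using sum_hit_weights_lower[OF finOs Os(3) finQ n a small big few p, of w]
    by (simp add: x_def card_F cong: sum.cong)
  finally have "measure_pmf.prob (gnp n (\<epsilon> / n))
          {R. real (card (\<Union>{Q\<in>Os. \<exists>x\<in>L. \<exists>y\<in>Q. {x, y} \<in> R})) < \<theta>}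
        \<le> exp (\<theta> / (2 * a) - 3 * (1 - exp (- (p * w * a))) * n / (64 * a))"
    by (simp add: exp_diff exp_minus field_simps)
  also have "\<dots> \<le> exp (- min (\<epsilon> * w / 128) (n / (64 * a)))"
  proof -
    have "p * w * a * n = \<epsilon> * w * a" using n by (simp add: p_def)
    thus ?thesis using hit_exponent_bound[OF a eps(2), of "p * w * a" w n] p
      by (simp add: \<theta>_def)
  qed
  finally show ?thesis by (simp add: \<theta>_def w_def)
qed

definition reach_within :: "nat set set \<Rightarrow> nat \<Rightarrow> nat \<Rightarrow> nat \<Rightarrow> bool" where
  "reach_within E u v d \<longleftrightarrow> (\<exists>xs. is_walk E xs \<and> hd xs = u \<and> last xs = v \<and> length xs \<le> Suc d)"

lemma is_walk_Cons: "is_walk E (x # xs) \<longleftrightarrow> (xs = [] \<or> ({x, hd xs} \<in> E \<and> is_walk E xs))"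
proof
  assume w: "is_walk E (x # xs)"
  show "xs = [] \<or> ({x, hd xs} \<in> E \<and> is_walk E xs)"
  proof (cases xs)
    case Nil thus ?thesis by simp
  next
    case (Cons y ys)
    have "{x, hd xs} \<in> E" using w Cons unfolding is_walk_def by (auto dest: spec[of _ 0])
    moreover have "is_walk E xs"
      unfolding is_walk_def
    proof (intro conjI allI impI)
      show "xs \<noteq> []" using Cons by simp
      fix i assume "Suc i < length xs"
      thus "{xs ! i, xs ! Suc i} \<in> E" using w unfolding is_walk_def
        by (auto dest: spec[of _ "Suc i"])
    qed
    ultimately show ?thesis by simp
  qed
next
  assume h: "xs = [] \<or> ({x, hd xs} \<in> E \<and> is_walk E xs)"
  show "is_walk E (x # xs)"
  proof (cases xs)
    case Nil thus ?thesis by (simp add: is_walk_def)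
  next
    case (Cons y ys)
    have e: "{x, y} \<in> E" and w: "is_walk E xs" using h Cons by auto
    show ?thesis unfolding is_walk_def
    proof (intro conjI allI impI)
      fix i assume i: "Suc i < length (x # xs)"
      show "{(x # xs) ! i, (x # xs) ! Suc i} \<in> E"
      proof (cases i)
        case 0 thus ?thesis using e Cons by simp
      next
        case (Suc j) thus ?thesis using w i unfolding is_walk_def by simp
      qed
    qed simp
  qed
qed

lemma is_walk_append:
  assumes "is_walk E xs" "is_walk E ys" "last xs = hd ys"
  shows "is_walk E (xs @ tl ys)"
  using assms
proof (induction xs)
  case Nil thus ?case by (simp add: is_walk_def)
next
  case (Cons x xs)
  show ?case
  proof (cases "xs = []")
    case True
    thus ?thesis using Cons.prems by (cases ys) (auto simp: is_walk_Cons)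
  next
    case False
    then obtain y zs where Cons2: "xs = y # zs" by (cases xs) auto
    have "is_walk E xs" "{x, hd xs} \<in> E" using Cons.prems(1) Cons2 by (auto simp: is_walk_Cons)
    moreover have "last xs = hd ys" using Cons.prems(3) Cons2 by simp
    ultimately have "is_walk E (xs @ tl ys)" using Cons.IH Cons.prems(2) by simp
    thus ?thesis using \<open>{x, hd xs} \<in> E\<close> Cons2 by (simp add: is_walk_Cons)
  qed
qed

lemma is_walk_mono: "is_walk E xs \<Longrightarrow> E \<subseteq> E' \<Longrightarrow> is_walk E' xs"
  unfolding is_walk_def by blast

lemma is_walk_rev: "is_walk E xs \<Longrightarrow> is_walk E (rev xs)"
proof (induction xs)
  case Nil thus ?case by (simp add: is_walk_def)
next
  case (Cons x xs)
  show ?case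
  proof (cases "xs = []")
    case True thus ?thesis by (simp add: is_walk_def)
  next
    case False
    then obtain y ys where xy: "xs = y # ys" by (cases xs) auto
    have w: "is_walk E xs" and e: "{x, y} \<in> E" using Cons.prems xy by (auto simp: is_walk_Cons)
    have e': "{y, x} \<in> E" using e by (simp add: insert_commute)
    have w2: "is_walk E [y, x]" using e' by (simp add: is_walk_Cons is_walk_def)
    have "last (rev xs) = hd [y, x]" using xy by simp
    hence "is_walk E (rev xs @ tl [y, x])"
      using Cons.IH[OF w] w2 by (intro is_walk_append) auto
    thus ?thesis using xy by simp
  qed
qed

lemma is_walk_take: "is_walk E xs \<Longrightarrow> 0 < k \<Longrightarrow> is_walk E (take k xs)"
  unfolding is_walk_def by auto

lemma is_walk_drop:
  assumes "is_walk E xs" "k < length xs"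
  shows "is_walk E (drop k xs)"
  unfolding is_walk_def
proof (intro conjI allI impI)
  show "drop k xs \<noteq> []" using assms(2) by simp
  fix i assume "Suc i < length (drop k xs)"
  hence "{xs ! (k + i), xs ! Suc (k + i)} \<in> E" using assms(1) unfolding is_walk_def by simp
  thus "{drop k xs ! i, drop k xs ! Suc i} \<in> E" using assms(2) by simp
qed

lemma walk_in_vertices:
  assumes "E \<subseteq> all_edges n" "is_walk E xs" "hd xs \<in> {1..n}" "i < length xs"
  shows "xs ! i \<in> {1..n}"
proof (cases i)
  case 0 thus ?thesis using assms by (simp add: hd_conv_nth is_walk_def)
next
  case (Suc j)
  have "{xs ! j, xs ! Suc j} \<in> all_edges n" using assms Suc unfolding is_walk_def by auto
  thus ?thesis using Suc by (auto simp: all_edges_def doubleton_eq_iff)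
qed

lemma reach_within_refl: "reach_within E u u d"
  unfolding reach_within_def by (rule exI[of _ "[u]"]) (simp add: is_walk_def)

lemma reach_within_edge: "{u, v} \<in> E \<Longrightarrow> reach_within E u v 1"
  unfolding reach_within_def by (rule exI[of _ "[u, v]"]) (simp add: is_walk_Cons is_walk_def)

lemma reach_within_mono:
  assumes "reach_within E u v d" "d \<le> d'" "E \<subseteq> E'"
  shows "reach_within E' u v d'"
proof -
  obtain xs where "is_walk E xs" "hd xs = u" "last xs = v" "length xs \<le> Suc d"
    using assms(1) unfolding reach_within_def by blast
  thus ?thesis
    using assms(2,3) is_walk_mono[of E xs E'] unfolding reach_within_def by (intro exI[of _ xs]) auto
qed

lemma reach_within_trans:
  assumes "reach_within E u v d1" "reach_within E v w d2"
  shows "reach_within E u w (d1 + d2)"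
proof -
  obtain xs where xs: "is_walk E xs" "hd xs = u" "last xs = v" "length xs \<le> Suc d1"
    using assms(1) unfolding reach_within_def by blast
  obtain ys where ys: "is_walk E ys" "hd ys = v" "last ys = w" "length ys \<le> Suc d2"
    using assms(2) unfolding reach_within_def by blast
  have ne: "xs \<noteq> []" "ys \<noteq> []" using xs ys unfolding is_walk_def by auto
  have "last (xs @ tl ys) = w"
    using xs(3) ys(2,3) ne by (cases ys) (auto simp: last_append)
  moreover have "is_walk E (xs @ tl ys)" using xs ys by (intro is_walk_append) auto
  ultimately show ?thesis
    using xs ys ne unfolding reach_within_def by (intro exI[of _ "xs @ tl ys"]) auto
qed

lemma reach_within_sym:
  assumes "reach_within E u v d"
  shows "reach_within E v u d"
proof -
  obtain xs where xs: "is_walk E xs" "hd xs = u" "last xs = v" "length xs \<le> Suc d"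
    using assms unfolding reach_within_def by blast
  hence "is_walk E (rev xs)" "hd (rev xs) = v" "last (rev xs) = u"
    using is_walk_rev by (auto simp: hd_rev last_rev)
  thus ?thesis using xs(4) unfolding reach_within_def by (intro exI[of _ "rev xs"]) simp
qed

lemma graph_diam_le:
  assumes "\<forall>u\<in>{1..n}. \<forall>v\<in>{1..n}. reach_within E u v D"
  shows "\<exists>k. graph_diam n E = enat k \<and> k \<le> D"
proof -
  have "graph_dist E u v \<le> enat D" if uv: "u \<in> {1..n}" "v \<in> {1..n}" for u v
  proof -
    obtain xs where xs: "is_walk E xs" "hd xs = u" "last xs = v" "length xs \<le> Suc D"
      using assms uv unfolding reach_within_def by meson
    hence "graph_dist E u v \<le> enat (length xs - 1)"
      unfolding graph_dist_def by (intro INF_lower) simp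
    also have "\<dots> \<le> enat D" using xs by simp
    finally show ?thesis .
  qed
  hence "graph_diam n E \<le> enat D" unfolding graph_diam_def by (intro SUP_least)
  thus ?thesis by (cases "graph_diam n E") simp_all
qed

section \<open>Cutting a connected graph into pieces\<close>

lemma reach_within_geodesic:
  assumes "reach_within G u v m" "\<And>j. j < m \<Longrightarrow> \<not> reach_within G u v j"
  obtains xs where "is_walk G xs" "hd xs = u" "length xs = Suc m"
    "\<And>i. i \<le> m \<Longrightarrow> reach_within G u (xs ! i) i"
    "\<And>i j. i \<le> m \<Longrightarrow> j < i \<Longrightarrow> \<not> reach_within G u (xs ! i) j"
proof -
  obtain xs where xs: "is_walk G xs" "hd xs = u" "last xs = v" "length xs \<le> Suc m"
    using assms(1) unfolding reach_within_def by blast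
  have ne: "xs \<noteq> []" using xs unfolding is_walk_def by auto
  have "reach_within G u v (length xs - 1)"
    unfolding reach_within_def using xs by (intro exI[of _ xs]) auto
  hence "\<not> length xs - 1 < m" using assms(2) by blast
  hence len: "length xs = Suc m" using xs(4) ne by (cases xs) auto
  have prefix: "reach_within G u (xs ! i) i" if "i \<le> m" for i
  proof -
    have "last (take (Suc i) xs) = xs ! i"
      by (subst last_conv_nth) (use ne that len in auto)
    thus ?thesis unfolding reach_within_def using xs ne that len
      by (intro exI[of _ "take (Suc i) xs"]) (auto intro: is_walk_take)
  qed
  have suffix: "reach_within G (xs ! i) v (m - i)" if "i \<le> m" for i
    unfolding reach_within_def using xs len that
    by (intro exI[of _ "drop i xs"]) (auto intro: is_walk_drop simp: hd_drop_conv_nth last_drop)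
  have "\<not> reach_within G u (xs ! i) j" if "i \<le> m" "j < i" for i j
  proof
    assume "reach_within G u (xs ! i) j"
    hence "reach_within G u v (j + (m - i))" using suffix[OF that(1)] by (rule reach_within_trans)
    moreover have "j + (m - i) < m" using that by simp
    ultimately show False using assms(2) by blast
  qed
  thus thesis using that xs len prefix by blast
qed

lemma card_ball_ge:
  assumes G: "G \<subseteq> all_edges n" "graph_connected n G" and u: "u \<in> {1..n}"
  shows "min n (Suc r) \<le> card {v \<in> {1..n}. reach_within G u v r}"
proof (cases "\<forall>v\<in>{1..n}. reach_within G u v r")
  case True
  hence "{v \<in> {1..n}. reach_within G u v r} = {1..n}" by auto
  thus ?thesis by simp
next
  case False
  then obtain v where v: "v \<in> {1..n}" "\<not> reach_within G u v r" by blast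
  obtain ws where "is_walk G ws" "hd ws = u" "last ws = v"
    using G(2) u v unfolding graph_connected_def by blast
  hence "reach_within G u v (length ws - 1)" unfolding reach_within_def by auto
  hence "\<exists>m. reach_within G u v m" ..
  define m where "m = (LEAST m. reach_within G u v m)"
  have "reach_within G u v m" unfolding m_def using \<open>\<exists>m. reach_within G u v m\<close> by (rule LeastI_ex)
  moreover have "\<not> reach_within G u v j" if "j < m" for j
    using not_less_Least that unfolding m_def by blast
  ultimately have m: "reach_within G u v m" "\<And>j. j < m \<Longrightarrow> \<not> reach_within G u v j" by blast+
  have "r < m"
  proof (rule ccontr)
    assume "\<not> r < m"
    hence "reach_within G u v r" using reach_within_mono[OF m(1) _ order_refl] by simp
    thus False using v(2) by blast
  qed
  obtain xs where xs: "is_walk G xs" "hd xs = u" "length xs = Suc m"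
    "\<And>i. i \<le> m \<Longrightarrow> reach_within G u (xs ! i) i"
    "\<And>i j. i \<le> m \<Longrightarrow> j < i \<Longrightarrow> \<not> reach_within G u (xs ! i) j"
    using reach_within_geodesic[OF m] by blast
  have inj: "inj_on (\<lambda>i. xs ! i) {0..r}"
  proof (rule inj_onI)
    have neq: "xs ! i \<noteq> xs ! j" if "i < j" "j \<le> r" for i j
      using xs(4)[of i] xs(5)[of j i] that \<open>r < m\<close> by auto
    fix i j assume "i \<in> {0..r}" "j \<in> {0..r}" "xs ! i = xs ! j"
    thus "i = j" using neq[of i j] neq[of j i] by (cases i j rule: linorder_cases) auto
  qed
  have sub: "(\<lambda>i. xs ! i) ` {0..r} \<subseteq> {v \<in> {1..n}. reach_within G u v r}"
  proof
    fix x assume "x \<in> (\<lambda>i. xs ! i) ` {0..r}"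
    then obtain i where i: "i \<le> r" "x = xs ! i" by auto
    have "x \<in> {1..n}" using walk_in_vertices[OF G(1) xs(1)] xs(2,3) u i \<open>r < m\<close> by simp
    moreover have "reach_within G u x r"
      using reach_within_mono[OF xs(4) i(1) order_refl] i \<open>r < m\<close> by simp
    ultimately show "x \<in> {v \<in> {1..n}. reach_within G u v r}" by simp
  qed
  have "Suc r = card ((\<lambda>i. xs ! i) ` {0..r})" using card_image[OF inj] by simp
  also have "\<dots> \<le> card {v \<in> {1..n}. reach_within G u v r}" by (rule card_mono[OF _ sub]) simp
  finally have "Suc r \<le> card {v \<in> {1..n}. reach_within G u v r}" .
  thus ?thesis by simp
qed

lemma exists_partition_card_le:
  fixes A :: "'a set"
  assumes "finite A" "0 < a"
  obtains C where "finite C" "\<And>X. X \<in> C \<Longrightarrow> X \<subseteq> A \<and> card X \<le> a" "\<Union>C = A" "disjoint C"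
    "card C * a \<le> card A + a"
proof -
  have "\<exists>C. finite C \<and> (\<forall>X\<in>C. X \<noteq> {} \<and> X \<subseteq> A \<and> card X \<le> a) \<and> \<Union>C = A \<and> disjoint C \<and>
            card C * a \<le> card A + a"
    using assms(1)
  proof (induction "card A" arbitrary: A rule: less_induct)
    case less
    show ?case
    proof (cases "card A \<le> a")
      case True
      show ?thesis
      proof (cases "A = {}")
        case True thus ?thesis by (intro exI[of _ "{}"]) auto
      next
        case False
        thus ?thesis using \<open>card A \<le> a\<close> by (intro exI[of _ "{A}"]) auto
      qed
    next
      case False
      then obtain X where X: "X \<subseteq> A" "card X = a" "finite X"
        by (metis le_less_linear less_imp_le obtain_subset_with_card_n)
      have "card (A - X) < card A" using X assms(2) less.prems False
        by (simp add: card_Diff_subset)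
      then obtain C where C: "finite C" "\<forall>Y\<in>C. Y \<noteq> {} \<and> Y \<subseteq> A - X \<and> card Y \<le> a"
        "\<Union>C = A - X" "disjoint C" "card C * a \<le> card (A - X) + a"
        using less.hyps[of "A - X"] less.prems by auto
      have Xne: "X \<noteq> {}" using X assms(2) by auto
      have XC: "X \<notin> C" using C(2) Xne by blast
      have cd: "card (A - X) = card A - a" using X less.prems by (simp add: card_Diff_subset)
      show ?thesis
      proof (intro exI[of _ "insert X C"] conjI)
        show "card (insert X C) * a \<le> card A + a"
          using C(1,5) XC cd False by simp
        show "disjoint (insert X C)"
          using C(2,4) unfolding disjoint_def by blast
      qed (use C X Xne in auto)
    qed
  qed
  thus thesis using that by blast
qed

lemma exists_maximal_separated:
  fixes V :: "'a set" and close :: "'a \<Rightarrow> 'a \<Rightarrow> bool"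
  assumes "finite V" "\<And>x. close x x" "\<And>x y. close x y \<Longrightarrow> close y x"
  obtains Z where "Z \<subseteq> V" "\<And>z z'. z \<in> Z \<Longrightarrow> z' \<in> Z \<Longrightarrow> z \<noteq> z' \<Longrightarrow> \<not> close z z'"
    "\<And>v. v \<in> V \<Longrightarrow> \<exists>z\<in>Z. close z v"
proof -
  define sep where "sep = (\<lambda>Z. Z \<subseteq> V \<and> (\<forall>z\<in>Z. \<forall>z'\<in>Z. z \<noteq> z' \<longrightarrow> \<not> close z z'))"
  have "sep {}" by (simp add: sep_def)
  moreover have "card Z < Suc (card V)" if "sep Z" for Z
    using that card_mono[OF assms(1)] unfolding sep_def by (simp add: le_imp_less_Suc)
  ultimately have "\<exists>k. (\<exists>Z. sep Z \<and> card Z = k) \<and> (\<forall>k'. (\<exists>Z. sep Z \<and> card Z = k') \<longrightarrow> k' \<le> k)"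
    by (intro ex_has_greatest_nat[where b = "Suc (card V)"]) auto
  then obtain Z where Z: "sep Z" and Zmax: "\<And>Z'. sep Z' \<Longrightarrow> card Z' \<le> card Z" by blast
  have "finite Z" using Z assms(1) unfolding sep_def by (auto intro: finite_subset)
  have cover: "\<exists>z\<in>Z. close z v" if "v \<in> V" for v
  proof (rule ccontr)
    assume far: "\<not> (\<exists>z\<in>Z. close z v)"
    have "sep (insert v Z)" unfolding sep_def
    proof (intro conjI ballI impI)
      show "insert v Z \<subseteq> V" using Z that unfolding sep_def by simp
      fix z z' assume "z \<in> insert v Z" "z' \<in> insert v Z" "z \<noteq> z'"
      thus "\<not> close z z'" using Z far assms(3) unfolding sep_def by auto
    qed
    hence "card (insert v Z) \<le> card Z" by (rule Zmax)
    moreover have "v \<notin> Z"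
    proof
      assume "v \<in> Z"
      hence "\<not> close v v" using far by blast
      thus False using assms(2) by simp
    qed
    ultimately show False using \<open>finite Z\<close> by simp
  qed
  show thesis
  proof (rule that)
    show "Z \<subseteq> V" using Z unfolding sep_def by simp
    show "\<not> close z z'" if "z \<in> Z" "z' \<in> Z" "z \<noteq> z'" for z z'
      using Z that unfolding sep_def by blast
  qed (rule cover)
qed

lemma card_separated_le:
  assumes G: "G \<subseteq> all_edges n" "graph_connected n G" and "a < n" and Z: "Z \<subseteq> {1..n}"
    and sep: "\<And>z z'. z \<in> Z \<Longrightarrow> z' \<in> Z \<Longrightarrow> z \<noteq> z' \<Longrightarrow> \<not> reach_within G z z' (2 * a)"
  shows "card Z * (a + 1) \<le> n"
proof -
  define ball where "ball = (\<lambda>z. {v \<in> {1..n}. reach_within G z v a})"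
  have finZ: "finite Z" using Z finite_subset by blast
  have disj: "ball z \<inter> ball z' = {}" if "z \<in> Z" "z' \<in> Z" "z \<noteq> z'" for z z'
  proof (rule ccontr)
    assume "ball z \<inter> ball z' \<noteq> {}"
    then obtain x where "reach_within G z x a" "reach_within G z' x a" unfolding ball_def by auto
    hence "reach_within G z z' (a + a)" using reach_within_trans reach_within_sym by blast
    thus False using sep[OF that] by (simp add: mult_2)
  qed
  have "card Z * (a + 1) = (\<Sum>z\<in>Z. a + 1)" by simp
  also have "\<dots> \<le> (\<Sum>z\<in>Z. card (ball z))"
  proof (rule sum_mono)
    fix z assume "z \<in> Z"
    thus "a + 1 \<le> card (ball z)"
      using card_ball_ge[OF G, of z a] Z \<open>a < n\<close> unfolding ball_def by auto
  qed
  also have "\<dots> = card (\<Union>z\<in>Z. ball z)"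
    by (rule card_UN_disjoint[symmetric]) (use finZ disj in \<open>auto simp: ball_def\<close>)
  also have "\<dots> \<le> card {1..n}" by (rule card_mono) (auto simp: ball_def)
  finally show ?thesis by simp
qed

lemma exists_refinement_card_le:
  fixes A :: "'b \<Rightarrow> 'a set"
  assumes "finite Z" "\<And>z. z \<in> Z \<Longrightarrow> finite (A z)" "disjoint_family_on A Z" "0 < a"
  obtains P where "finite P" "\<Union>P = (\<Union>z\<in>Z. A z)" "disjoint P"
    "\<And>Q. Q \<in> P \<Longrightarrow> \<exists>z\<in>Z. Q \<subseteq> A z \<and> card Q \<le> a"
    "card P * a \<le> card (\<Union>z\<in>Z. A z) + card Z * a"
proof -
  have "\<forall>z\<in>Z. \<exists>C. finite C \<and> (\<forall>X\<in>C. X \<subseteq> A z \<and> card X \<le> a) \<and> \<Union>C = A z \<and> disjoint C \<and>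
          card C * a \<le> card (A z) + a"
  proof
    fix z assume "z \<in> Z"
    then obtain C where "finite C" "\<And>X. X \<in> C \<Longrightarrow> X \<subseteq> A z \<and> card X \<le> a"
      "\<Union>C = A z" "disjoint C" "card C * a \<le> card (A z) + a"
      using exists_partition_card_le[OF assms(2) assms(4)] by blast
    thus "\<exists>C. finite C \<and> (\<forall>X\<in>C. X \<subseteq> A z \<and> card X \<le> a) \<and> \<Union>C = A z \<and> disjoint C \<and>
            card C * a \<le> card (A z) + a" by blast
  qed
  hence "\<exists>C. \<forall>z\<in>Z. finite (C z) \<and> (\<forall>X\<in>C z. X \<subseteq> A z \<and> card X \<le> a) \<and>
      \<Union>(C z) = A z \<and> disjoint (C z) \<and> card (C z) * a \<le> card (A z) + a"
    by (rule bchoice)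
  then obtain C where "\<forall>z\<in>Z. finite (C z) \<and> (\<forall>X\<in>C z. X \<subseteq> A z \<and> card X \<le> a) \<and>
      \<Union>(C z) = A z \<and> disjoint (C z) \<and> card (C z) * a \<le> card (A z) + a"
    by (elim exE)
  hence C: "finite (C z)" "\<And>X. X \<in> C z \<Longrightarrow> X \<subseteq> A z \<and> card X \<le> a" "\<Union>(C z) = A z"
    "disjoint (C z)" "card (C z) * a \<le> card (A z) + a" if "z \<in> Z" for z
    using that by simp_all
  define P where "P = (\<Union>z\<in>Z. C z)"
  show thesis
  proof (rule that)
    show "finite P" unfolding P_def using assms(1) C(1) by simp
    have "\<Union>P = (\<Union>z\<in>Z. \<Union>(C z))" unfolding P_def by blast
    also have "\<dots> = (\<Union>z\<in>Z. A z)" using C(3) by (intro SUP_cong refl)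
    finally show "\<Union>P = (\<Union>z\<in>Z. A z)" .
    show "\<exists>z\<in>Z. Q \<subseteq> A z \<and> card Q \<le> a" if "Q \<in> P" for Q
    proof -
      obtain z where "z \<in> Z" "Q \<in> C z" using \<open>Q \<in> P\<close> unfolding P_def by blast
      thus ?thesis using C(2) by blast
    qed
    show "disjoint P"
    proof (rule disjointI)
      fix Q Q' assume "Q \<in> P" "Q' \<in> P" "Q \<noteq> Q'"
      then obtain z z' where z: "z \<in> Z" "z' \<in> Z" "Q \<in> C z" "Q' \<in> C z'" unfolding P_def by blast
      show "Q \<inter> Q' = {}"
      proof (cases "z = z'")
        case True
        thus ?thesis using z C(4)[of z] \<open>Q \<noteq> Q'\<close> by (simp add: disjoint_def)
      next
        case False
        hence "A z \<inter> A z' = {}" using assms(3) z(1,2) by (simp add: disjoint_family_on_def)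
        moreover have "Q \<subseteq> A z" "Q' \<subseteq> A z'" using z C(2) by auto
        ultimately show ?thesis by blast
      qed
    qed
    have "card P * a \<le> (\<Sum>z\<in>Z. card (C z)) * a"
      unfolding P_def by (intro mult_right_mono card_UN_le assms(1)) simp
    also have "\<dots> \<le> (\<Sum>z\<in>Z. card (A z) + a)"
      unfolding sum_distrib_right using C(5) by (intro sum_mono) simp
    also have "\<dots> = card (\<Union>z\<in>Z. A z) + card Z * a"
      using assms(1-3) by (simp add: sum.distrib card_UN_disjoint disjoint_family_on_def)
    finally show "card P * a \<le> card (\<Union>z\<in>Z. A z) + card Z * a" .
  qed
qed

text \<open>Pieces: clusters around a maximal \<open>2a\<close>-separated set of centres, chopped into blocks of
  size at most \<open>a\<close>. Their number is at most \<open>n/a\<close> plus one per centre, and there are at most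
  \<open>n/(a+1)\<close> centres because the \<open>a\<close>-balls around them are disjoint and have more than \<open>a\<close> vertices.\<close>

lemma exists_pieces:
  assumes G: "G \<subseteq> all_edges n" "graph_connected n G" and a: "0 < a" "a < n"
  obtains P where "finite P" "\<Union>P = {1..n}" "disjoint P" "\<And>Q. Q \<in> P \<Longrightarrow> card Q \<le> a"
    "\<And>Q x y. Q \<in> P \<Longrightarrow> x \<in> Q \<Longrightarrow> y \<in> Q \<Longrightarrow> reach_within G x y (4 * a)"
    "card P * a \<le> 2 * n"
proof -
  obtain Z where Z: "Z \<subseteq> {1..n}"
    "\<And>z z'. z \<in> Z \<Longrightarrow> z' \<in> Z \<Longrightarrow> z \<noteq> z' \<Longrightarrow> \<not> reach_within G z z' (2 * a)"
    and cover: "\<And>v. v \<in> {1..n} \<Longrightarrow> \<exists>z\<in>Z. reach_within G z v (2 * a)"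
    using exists_maximal_separated[of "{1..n}" "\<lambda>z v. reach_within G z v (2 * a)",
        OF finite_atLeastAtMost reach_within_refl reach_within_sym] by blast
  define c where "c = (\<lambda>v. SOME z. z \<in> Z \<and> reach_within G z v (2 * a))"
  have c: "c v \<in> Z \<and> reach_within G (c v) v (2 * a)" if "v \<in> {1..n}" for v
    unfolding c_def by (rule someI_ex) (use cover[OF that] in blast)
  define cluster where "cluster = (\<lambda>z. {v \<in> {1..n}. c v = z})"
  have finZ: "finite Z" using Z(1) finite_subset by blast
  have fin: "finite (cluster z)" if "z \<in> Z" for z by (simp add: cluster_def)
  have disj: "disjoint_family_on cluster Z" by (auto simp: disjoint_family_on_def cluster_def)
  obtain P where P: "finite P" "\<Union>P = (\<Union>z\<in>Z. cluster z)" "disjoint P"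
    "\<And>Q. Q \<in> P \<Longrightarrow> \<exists>z\<in>Z. Q \<subseteq> cluster z \<and> card Q \<le> a"
    "card P * a \<le> card (\<Union>z\<in>Z. cluster z) + card Z * a"
    using exists_refinement_card_le[OF finZ fin disj a(1)] by metis
  have clusters: "(\<Union>z\<in>Z. cluster z) = {1..n}" using c by (auto simp: cluster_def)
  show thesis
  proof (rule that)
    show "finite P" "disjoint P" by (fact P(1), fact P(3))
    show "\<Union>P = {1..n}" using P(2) clusters by simp
    show "card Q \<le> a" if "Q \<in> P" for Q using P(4)[OF that] by blast
    show "reach_within G x y (4 * a)" if "Q \<in> P" "x \<in> Q" "y \<in> Q" for Q x y
    proof -
      obtain z where "Q \<subseteq> cluster z" using P(4)[OF \<open>Q \<in> P\<close>] by blast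
      hence xy: "x \<in> {1..n}" "c x = z" "y \<in> {1..n}" "c y = z" using that by (auto simp: cluster_def)
      hence "reach_within G z x (2 * a)" "reach_within G z y (2 * a)"
        using c[OF xy(1)] c[OF xy(3)] by auto
      hence "reach_within G x y (2 * a + 2 * a)" using reach_within_trans reach_within_sym by blast
      thus ?thesis by simp
    qed
    show "card P * a \<le> 2 * n"
      using P(5) clusters card_separated_le[OF G a(2) Z] by (simp add: algebra_simps)
  qed
qed

section \<open>Exploring the pieces layer by layer\<close>

definition new_pieces :: "nat set set \<Rightarrow> nat set set \<Rightarrow> nat set set \<Rightarrow> nat set set \<Rightarrow> nat set set" where
  "new_pieces P B L R = {Q \<in> P - B. \<exists>x\<in>\<Union>L. \<exists>y\<in>Q. {x, y} \<in> R}"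

text \<open>\<open>explore P S R i = (B, L)\<close>: after \<open>i\<close> rounds of breadth-first search on the pieces \<open>P\<close> from the
  pieces \<open>S\<close>, using only the random edges \<open>R\<close>, the pieces \<open>B\<close> have been reached and \<open>L \<subseteq> B\<close> is the
  last layer.\<close>

fun explore :: "nat set set \<Rightarrow> nat set set \<Rightarrow> nat set set \<Rightarrow> nat \<Rightarrow> nat set set \<times> nat set set" where
  "explore P S R 0 = (S, S)"
| "explore P S R (Suc i) =
     (case explore P S R i of (B, L) \<Rightarrow> (B \<union> new_pieces P B L R, new_pieces P B L R))"

lemma explore_subset: "S \<subseteq> P \<Longrightarrow> explore P S R i = (B, L) \<Longrightarrow> L \<subseteq> B \<and> B \<subseteq> P"
proof (induction i arbitrary: B L)
  case (Suc i)
  obtain B0 L0 where "explore P S R i = (B0, L0)" by fastforce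
  thus ?case using Suc by (auto simp: new_pieces_def)
qed auto

lemma explore_mono:
  assumes "explore P S R i = (B, L)" "explore P S R j = (B', L')" "i \<le> j"
  shows "B \<subseteq> B'"
  using assms(2,3)
proof (induction j arbitrary: B' L')
  case (Suc j)
  obtain B0 L0 where b: "explore P S R j = (B0, L0)" by fastforce
  show ?case
  proof (cases "i = Suc j")
    case True thus ?thesis using Suc.prems assms(1) by simp
  next
    case False
    hence "B \<subseteq> B0" using Suc.IH[OF b] Suc.prems(2) by simp
    thus ?thesis using Suc.prems(1) b by auto
  qed
qed (use assms(1) in simp)

lemma explore_local:
  assumes "explore P S R i = (B, L)" "\<And>e. e \<inter> \<Union>(B - L) \<noteq> {} \<Longrightarrow> e \<in> R \<longleftrightarrow> e \<in> R'" "S \<subseteq> P"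
  shows "explore P S R' i = (B, L)"
  using assms
proof (induction i arbitrary: B L)
  case (Suc i)
  obtain B0 L0 where b: "explore P S R i = (B0, L0)" by fastforce
  have inv: "L0 \<subseteq> B0" using explore_subset[OF Suc.prems(3) b] by auto
  have BL: "B = B0 \<union> new_pieces P B0 L0 R" "L = new_pieces P B0 L0 R" using Suc.prems(1) b by auto
  have "B - L = B0" using BL by (auto simp: new_pieces_def)
  hence agree: "e \<in> R \<longleftrightarrow> e \<in> R'" if "e \<inter> \<Union>B0 \<noteq> {}" for e
    using Suc.prems(2) that by simp
  have "explore P S R' i = (B0, L0)"
  proof (rule Suc.IH[OF b _ Suc.prems(3)])
    fix e assume "e \<inter> \<Union>(B0 - L0) \<noteq> {}"
    hence "e \<inter> \<Union>B0 \<noteq> {}" by blast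
    thus "e \<in> R \<longleftrightarrow> e \<in> R'" by (rule agree)
  qed
  moreover have "new_pieces P B0 L0 R' = new_pieces P B0 L0 R"
  proof -
    have "{x, y} \<in> R \<longleftrightarrow> {x, y} \<in> R'" if "x \<in> \<Union>L0" for x y
      using agree[of "{x, y}"] that inv by blast
    thus ?thesis unfolding new_pieces_def by blast
  qed
  ultimately show ?case using BL by simp
qed auto

lemma new_pieces_local:
  assumes "disjoint P" "L \<subseteq> B" "B \<subseteq> P"
  shows "new_pieces P B L R = new_pieces P B L (R - {e. e \<inter> \<Union>(B - L) \<noteq> {}})"
proof -
  have "z \<notin> \<Union>(B - L)" if "z \<in> Q" "Q \<in> L \<union> (P - B)" for z Q
  proof
    assume "z \<in> \<Union>(B - L)"
    then obtain Q' where "Q' \<in> B - L" "z \<in> Q'" by auto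
    moreover have "Q \<noteq> Q'" "Q \<in> P" using that \<open>Q' \<in> B - L\<close> assms(2,3) by auto
    ultimately show False using assms that unfolding disjoint_def by blast
  qed
  hence "{x, y} \<inter> \<Union>(B - L) = {}" if "x \<in> \<Union>L" "y \<in> Q" "Q \<in> P - B" for x y Q
    using that by blast
  thus ?thesis unfolding new_pieces_def by blast
qed

lemma explore_reach_within:
  assumes S: "S = {Q \<in> P. \<exists>z\<in>Q. reach_within G u z r0}"
    and P: "\<And>Q x y. Q \<in> P \<Longrightarrow> x \<in> Q \<Longrightarrow> y \<in> Q \<Longrightarrow> reach_within G x y (4 * a)"
    and "explore P S R i = (B, L)" "Q \<in> B" "y \<in> Q"
  shows "reach_within (G \<union> R) u y (r0 + 4 * a + i * (4 * a + 1))"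
  using assms(3-5)
proof (induction i arbitrary: B L Q y)
  case 0
  then obtain z where z: "z \<in> Q" "reach_within G u z r0" "Q \<in> P" using S by auto
  hence "reach_within G u y (r0 + 4 * a)" using reach_within_trans[OF z(2) P[OF z(3,1) 0(3)]] by simp
  thus ?case by (rule reach_within_mono) auto
next
  case (Suc i)
  obtain B0 L0 where b: "explore P S R i = (B0, L0)" by fastforce
  have BL: "B = B0 \<union> new_pieces P B0 L0 R" "L = new_pieces P B0 L0 R" using Suc.prems(1) b by auto
  show ?case
  proof (cases "Q \<in> B0")
    case True
    show ?thesis by (rule reach_within_mono[OF Suc.IH[OF b True Suc.prems(3)]]) auto
  next
    case False
    hence "Q \<in> new_pieces P B0 L0 R" using BL Suc.prems(2) by auto
    then obtain x y' where xy: "x \<in> \<Union>L0" "y' \<in> Q" "{x, y'} \<in> R" "Q \<in> P"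
      unfolding new_pieces_def by auto
    have "L0 \<subseteq> B0" using explore_subset[OF _ b] S by auto
    then obtain Q1 where "Q1 \<in> B0" "x \<in> Q1" using xy(1) by blast
    hence r1: "reach_within (G \<union> R) u x (r0 + 4 * a + i * (4 * a + 1))" by (rule Suc.IH[OF b])
    have r2: "reach_within (G \<union> R) x y' 1"
      using xy by (intro reach_within_mono[OF reach_within_edge]) auto
    have r3: "reach_within (G \<union> R) y' y (4 * a)"
      using reach_within_mono[OF P[OF xy(4,2) Suc.prems(3)]] by simp
    have "reach_within (G \<union> R) u y (r0 + 4 * a + i * (4 * a + 1) + 1 + 4 * a)"
      using reach_within_trans[OF reach_within_trans[OF r1 r2] r3] .
    thus ?thesis by simp
  qed
qed

lemma card_Union_Un_disjoint:
  assumes "disjoint (B \<union> B')" "B \<inter> B' = {}" "finite (\<Union>B)" "finite (\<Union>B')"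
  shows "card (\<Union>(B \<union> B')) = card (\<Union>B) + card (\<Union>B')"
proof -
  have "\<Union>B \<inter> \<Union>B' = {}"
  proof (rule ccontr)
    assume "\<Union>B \<inter> \<Union>B' \<noteq> {}"
    then obtain x Q Q' where "x \<in> Q" "x \<in> Q'" "Q \<in> B" "Q' \<in> B'" by blast
    moreover hence "Q \<noteq> Q'" using assms(2) by auto
    ultimately show False using assms(1) unfolding disjoint_def by blast
  qed
  thus ?thesis using assms(3,4) by (simp add: card_Un_disjoint)
qed

definition stalls :: "nat \<Rightarrow> nat \<Rightarrow> nat set set \<Rightarrow> nat set set \<Rightarrow> nat set set \<Rightarrow> nat set set \<Rightarrow> bool" where
  "stalls n W P R B L \<longleftrightarrow> real (card (\<Union>B)) \<le> n / 2 \<and> W \<le> card (\<Union>L) \<and>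
     real (card (\<Union>(new_pieces P B L R))) < min (2 * real (card (\<Union>L))) (n / 128)"

lemma prob_new_pieces_few:
  fixes n a :: nat and \<epsilon> :: real
  assumes n: "0 < n" and a: "0 < a" and eps: "0 < \<epsilon>" "64 \<le> \<epsilon> * a" "\<epsilon> \<le> n"
    and P: "\<Union>P = {1..n}" "disjoint P" "\<forall>Q\<in>P. card Q \<le> a" "real (card P) \<le> 2 * real n / a"
    and BL: "B \<subseteq> P" "L \<subseteq> B" and half: "real (card (\<Union>B)) \<le> n / 2"
  shows "measure_pmf.prob (gnp n (\<epsilon> / n))
           {R. real (card (\<Union>(new_pieces P B L R))) < min (2 * real (card (\<Union>L))) (n / 128)}
         \<le> exp (- min (\<epsilon> * card (\<Union>L) / 128) (n / (64 * a)))"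
proof -
  have disj: "\<Union>L \<inter> \<Union>(P - B) = {}"
  proof (rule ccontr)
    assume "\<Union>L \<inter> \<Union>(P - B) \<noteq> {}"
    then obtain x Q Q' where "x \<in> Q" "x \<in> Q'" "Q \<in> L" "Q' \<in> P - B" by blast
    moreover hence "Q \<noteq> Q'" "Q \<in> P" using BL by auto
    ultimately show False using P(2) unfolding disjoint_def by blast
  qed
  have "card (\<Union>P) = card (\<Union>B) + card (\<Union>(P - B))"
  proof -
    have "P = B \<union> (P - B)" using BL by auto
    moreover have "\<Union>B \<subseteq> {1..n}" "\<Union>(P - B) \<subseteq> {1..n}" using P(1) BL by auto
    hence "finite (\<Union>B)" "finite (\<Union>(P - B))" by (auto intro: finite_subset)
    ultimately show ?thesis using card_Union_Un_disjoint[of B "P - B"] P(2) by auto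
  qed
  hence "real n / 2 \<le> card (\<Union>(P - B))" using P(1) half by simp
  moreover have "card (P - B) \<le> card P"
    using P(1) finite_UnionD[of P] by (intro card_mono) auto
  hence "real (card (P - B)) \<le> 2 * real n / a" using P(4) by linarith
  moreover have "disjoint (P - B)" using P(2) by (rule pairwise_subset) auto
  moreover have "\<Union>L \<subseteq> {1..n}" "\<Union>(P - B) \<subseteq> {1..n}" using P(1) BL by auto
  moreover have "\<forall>Q\<in>P - B. card Q \<le> a" using P(3) by blast
  ultimately show ?thesis
    unfolding new_pieces_def using prob_layer_hits_few_pieces[OF n a eps _ _ disj] by blast
qed

text \<open>Given the state after \<open>i\<close> rounds, the next layer depends only on the random edges between the
  last layer and the unexplored pieces, which the first \<open>i\<close> rounds have not looked at.\<close>

lemma prob_explore_state_stalls: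
  fixes n a W :: nat and \<epsilon> :: real
  assumes n: "0 < n" and a: "0 < a" and eps: "0 < \<epsilon>" "64 \<le> \<epsilon> * a" "\<epsilon> \<le> n"
    and P: "\<Union>P = {1..n}" "disjoint P" "\<forall>Q\<in>P. card Q \<le> a" "real (card P) \<le> 2 * real n / a"
    and S: "S \<subseteq> P" and BL: "B \<subseteq> P" "L \<subseteq> B"
  shows "measure_pmf.prob (gnp n (\<epsilon> / n)) {R. explore P S R i = (B, L) \<and> stalls n W P R B L}
         \<le> measure_pmf.prob (gnp n (\<epsilon> / n)) {R. explore P S R i = (B, L)} *
           exp (- min (\<epsilon> * W / 128) (n / (64 * a)))"
proof (cases "real (card (\<Union>B)) \<le> n / 2 \<and> W \<le> card (\<Union>L)")
  case False
  hence empty: "{R. explore P S R i = (B, L) \<and> stalls n W P R B L} = {}" by (auto simp: stalls_def)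
  show ?thesis unfolding empty by simp
next
  case True
  let ?M = "gnp n (\<epsilon> / n)"
  define X where "X = {e. e \<inter> \<Union>(B - L) \<noteq> {}}"
  define few where "few = (\<lambda>R. real (card (\<Union>(new_pieces P B L R))) < min (2 * real (card (\<Union>L))) (n / 128))"
  have state: "explore P S R i = (B, L) \<longleftrightarrow> explore P S (R \<inter> X) i = (B, L)" for R
    using explore_local[OF _ _ S, of R i B L "R \<inter> X"] explore_local[OF _ _ S, of "R \<inter> X" i B L R]
    by (auto simp: X_def)
  have few_local: "few R \<longleftrightarrow> few (R - X)" for R
    unfolding few_def X_def using new_pieces_local[OF P(2) BL(2,1)] by simp
  have "{R. explore P S R i = (B, L) \<and> stalls n W P R B L} =
          {R. explore P S (R \<inter> X) i = (B, L) \<and> few (R - X)}"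
  proof (intro Collect_cong)
    fix R show "explore P S R i = (B, L) \<and> stalls n W P R B L \<longleftrightarrow>
                  explore P S (R \<inter> X) i = (B, L) \<and> few (R - X)"
      using True state[of R] few_local[of R] by (simp add: stalls_def few_def)
  qed
  moreover have "{R. explore P S (R \<inter> X) i = (B, L)} = {R. explore P S R i = (B, L)}"
    using state by (intro Collect_cong) simp
  moreover have "{R. few (R - X)} = {R. few R}" using few_local by (intro Collect_cong) simp
  ultimately have "measure_pmf.prob ?M {R. explore P S R i = (B, L) \<and> stalls n W P R B L} =
          measure_pmf.prob ?M {R. explore P S R i = (B, L)} * measure_pmf.prob ?M {R. few R}"
    unfolding gnp_eq_random_edges
    using prob_random_edges_indep[OF finite_all_edges, where \<phi> = "\<lambda>R. explore P S R i = (B, L)"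
        and X = X and \<psi> = few] by simp
  also have "measure_pmf.prob ?M {R. few R} \<le> exp (- min (\<epsilon> * card (\<Union>L) / 128) (n / (64 * a)))"
    unfolding few_def using prob_new_pieces_few[OF n a eps P BL] True by simp
  also have "\<dots> \<le> exp (- min (\<epsilon> * W / 128) (n / (64 * a)))"
  proof -
    have "\<epsilon> * W \<le> \<epsilon> * card (\<Union>L)" using True eps(1) by (intro mult_left_mono) auto
    thus ?thesis by (simp add: min_def)
  qed
  finally show ?thesis by (simp add: mult_left_mono)
qed

lemma prob_explore_stalls:
  fixes n a W :: nat and \<epsilon> :: real
  assumes n: "0 < n" and a: "0 < a" and eps: "0 < \<epsilon>" "64 \<le> \<epsilon> * a" "\<epsilon> \<le> n"
    and P: "\<Union>P = {1..n}" "disjoint P" "\<forall>Q\<in>P. card Q \<le> a" "real (card P) \<le> 2 * real n / a"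
    and S: "S \<subseteq> P"
  shows "measure_pmf.prob (gnp n (\<epsilon> / n)) {R. case_prod (stalls n W P R) (explore P S R i)}
         \<le> exp (- min (\<epsilon> * W / 128) (n / (64 * a)))"
proof -
  let ?M = "gnp n (\<epsilon> / n)"
  let ?\<delta> = "exp (- min (\<epsilon> * W / 128) (n / (64 * a)))"
  define H where "H = {(B, L). B \<subseteq> P \<and> L \<subseteq> B}"
  define A where "A = (\<lambda>h. {R. explore P S R i = h})"
  define E where "E = (\<lambda>h. {R. explore P S R i = h \<and> case_prod (stalls n W P R) h})"
  have "finite P" using P(1) finite_UnionD[of P] by simp
  moreover have "H \<subseteq> Pow P \<times> Pow P" unfolding H_def by auto
  ultimately have finH: "finite H" by (auto intro: finite_subset)
  have "{R. case_prod (stalls n W P R) (explore P S R i)} \<subseteq> (\<Union>h\<in>H. E h)"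
  proof
    fix R assume "R \<in> {R. case_prod (stalls n W P R) (explore P S R i)}"
    moreover obtain B L where "explore P S R i = (B, L)" by fastforce
    moreover have "(B, L) \<in> H" using explore_subset[OF S \<open>explore P S R i = (B, L)\<close>] by (simp add: H_def)
    ultimately show "R \<in> (\<Union>h\<in>H. E h)" unfolding E_def by auto
  qed
  hence "measure_pmf.prob ?M {R. case_prod (stalls n W P R) (explore P S R i)}
           \<le> measure_pmf.prob ?M (\<Union>h\<in>H. E h)"
    by (rule measure_pmf.finite_measure_mono) simp
  also have "\<dots> \<le> (\<Sum>h\<in>H. measure_pmf.prob ?M (E h))"
    by (rule measure_pmf.finite_measure_subadditive_finite[OF finH]) auto
  also have "\<dots> \<le> (\<Sum>h\<in>H. measure_pmf.prob ?M (A h) * ?\<delta>)"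
  proof (rule sum_mono)
    fix h assume "h \<in> H"
    then obtain B L where "h = (B, L)" "B \<subseteq> P" "L \<subseteq> B" unfolding H_def by blast
    thus "measure_pmf.prob ?M (E h) \<le> measure_pmf.prob ?M (A h) * ?\<delta>"
      using prob_explore_state_stalls[OF n a eps P S] by (simp add: A_def E_def)
  qed
  also have "\<dots> = measure_pmf.prob ?M (\<Union>h\<in>H. A h) * ?\<delta>"
    by (subst measure_pmf.finite_measure_finite_Union[OF finH])
       (auto simp: disjoint_family_on_def A_def sum_distrib_right)
  also have "\<dots> \<le> ?\<delta>" by (simp add: mult_left_le_one_le)
  finally show ?thesis .
qed

lemma card_explore_Suc:
  assumes P: "disjoint P" "finite (\<Union>P)" and S: "S \<subseteq> P" and b: "explore P S R i = (B, L)"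
  shows "card (\<Union>(B \<union> new_pieces P B L R)) = card (\<Union>B) + card (\<Union>(new_pieces P B L R))"
proof (rule card_Union_Un_disjoint)
  have B: "B \<subseteq> P" using explore_subset[OF S b] by auto
  have N: "new_pieces P B L R \<subseteq> P - B" by (auto simp: new_pieces_def)
  show "disjoint (B \<union> new_pieces P B L R)" by (rule pairwise_subset[OF P(1)]) (use B N in auto)
  show "B \<inter> new_pieces P B L R = {}" using N by blast
  show "finite (\<Union>B)" "finite (\<Union>(new_pieces P B L R))"
    using P(2) B N by (meson Union_mono finite_subset Diff_subset order_trans)+
qed

text \<open>Without stalls, the layers double until they reach size \<open>n/128\<close>; once they do, \<open>65\<close> more rounds
  add more than \<open>n/2\<close> vertices.\<close>

lemma explore_covers_half:
  fixes n W T :: nat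
  assumes P: "disjoint P" "finite (\<Union>P)" and S: "S \<subseteq> P" and n: "0 < n"
    and W: "1 \<le> W" "real W \<le> n / 128" "W \<le> card (\<Union>S)" and T: "n / 128 \<le> 2 ^ T * real W"
    and no_stall: "\<And>i. i < T + 65 \<Longrightarrow> \<not> case_prod (stalls n W P R) (explore P S R i)"
  shows "n / 2 < real (card (\<Union>(fst (explore P S R (T + 65)))))"
proof (rule ccontr)
  define wB where "wB = (\<lambda>i. real (card (\<Union>(fst (explore P S R i)))))"
  define wL where "wL = (\<lambda>i. real (card (\<Union>(snd (explore P S R i)))))"
  assume "\<not> n / 2 < real (card (\<Union>(fst (explore P S R (T + 65)))))"
  hence half: "wB i \<le> n / 2" if "i \<le> T + 65" for i
  proof -
    have "fst (explore P S R i) \<subseteq> fst (explore P S R (T + 65))"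
      using explore_mono[of P S R i _ _ "T + 65"] that by (metis prod.collapse)
    moreover have "fst (explore P S R (T + 65)) \<subseteq> P"
      using explore_subset[OF S, of R "T + 65"] by (metis prod.collapse)
    moreover have "finite (\<Union>(fst (explore P S R (T + 65))))"
      using P(2) \<open>fst (explore P S R (T + 65)) \<subseteq> P\<close> by (meson Union_mono finite_subset)
    ultimately have "card (\<Union>(fst (explore P S R i))) \<le> card (\<Union>(fst (explore P S R (T + 65))))"
      by (intro card_mono) auto
    thus ?thesis using \<open>\<not> n / 2 < _\<close> by (simp add: wB_def)
  qed
  have step: "wB (Suc i) = wB i + wL (Suc i) \<and>
      (i < T + 65 \<longrightarrow> W \<le> wL i \<longrightarrow> min (2 * wL i) (n / 128) \<le> wL (Suc i))" if "i \<le> T + 65" for i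
  proof -
    obtain B L where b: "explore P S R i = (B, L)" by fastforce
    have "card (\<Union>(B \<union> new_pieces P B L R)) = card (\<Union>B) + card (\<Union>(new_pieces P B L R))"
      by (rule card_explore_Suc[OF P S b])
    moreover have "\<not> stalls n W P R B L" if "i < T + 65" using no_stall[OF that] b by simp
    ultimately show ?thesis using half[OF that] b by (auto simp: wB_def wL_def stalls_def)
  qed
  have lower: "min (2 ^ i * real W) (n / 128) \<le> wL i" if "i \<le> T + 65" for i
    using that
  proof (induction i)
    case 0
    thus ?case using W(3) by (simp add: wL_def)
  next
    case (Suc i)
    hence IH: "min (2 ^ i * real W) (n / 128) \<le> wL i" by simp
    have "1 * real W \<le> 2 ^ i * real W" by (intro mult_right_mono) auto
    hence "real W \<le> min (2 ^ i * real W) (n / 128)" using W(2) by simp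
    hence "W \<le> wL i" using IH by linarith
    hence "min (2 * wL i) (n / 128) \<le> wL (Suc i)" using step[of i] Suc.prems by simp
    moreover have "min (2 ^ Suc i * real W) (n / 128) \<le> 2 * wL i"
    proof (cases "2 ^ i * real W \<le> n / 128")
      case True
      thus ?thesis using IH by simp
    next
      case False
      hence "n / 128 \<le> wL i" using IH by simp
      moreover have "0 \<le> wL i" by (simp add: wL_def)
      ultimately show ?thesis by simp
    qed
    hence "min (2 ^ Suc i * real W) (n / 128) \<le> min (2 * wL i) (n / 128)" by simp
    ultimately show ?case by linarith
  qed
  have acc: "real j * (n / 128) \<le> wB (T + j)" if "j \<le> 65" for j
    using that
  proof (induction j)
    case (Suc j)
    have "(2::real) ^ T \<le> 2 ^ Suc (T + j)" by (intro power_increasing) auto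
    hence "n / 128 \<le> 2 ^ Suc (T + j) * real W" using T by (meson order_trans mult_right_mono of_nat_0_le_iff)
    hence "min (2 ^ Suc (T + j) * real W) (n / 128) = n / 128" by (rule min_absorb2)
    hence "n / 128 \<le> wL (Suc (T + j))" using lower[of "Suc (T + j)"] Suc.prems by simp
    thus ?case using Suc step[of "T + j"] by (simp add: algebra_simps)
  qed (simp add: wB_def)
  have "65 * (n / 128) \<le> wB (T + 65)" using acc[of 65] by simp
  thus False using half[of "T + 65"] n by simp
qed

definition start_pieces :: "nat set set \<Rightarrow> nat set set \<Rightarrow> nat \<Rightarrow> nat \<Rightarrow> nat set set" where
  "start_pieces G P r u = {Q \<in> P. \<exists>z\<in>Q. reach_within G u z r}"

lemma card_start_pieces_ge:
  assumes G: "G \<subseteq> all_edges n" "graph_connected n G" and u: "u \<in> {1..n}"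
    and P: "\<Union>P = {1..n}" and r: "r \<le> n"
  shows "r \<le> card (\<Union>(start_pieces G P r u))"
proof -
  have "{v \<in> {1..n}. reach_within G u v r} \<subseteq> \<Union>(start_pieces G P r u)"
    using P unfolding start_pieces_def by blast
  moreover have "finite (\<Union>(start_pieces G P r u))"
    using P unfolding start_pieces_def by (metis (no_types, lifting) Union_mono finite_atLeastAtMost
        finite_subset mem_Collect_eq subsetI)
  ultimately have "card {v \<in> {1..n}. reach_within G u v r} \<le> card (\<Union>(start_pieces G P r u))"
    by (rule card_mono[rotated])
  thus ?thesis using card_ball_ge[OF G u, of r] r by simp
qed

text \<open>The explorations from any two vertices both cover more than half of the vertices, so they
  meet.\<close>

lemma diam_le_if_no_stall:
  fixes n a W T :: nat
  assumes G: "G \<subseteq> all_edges n" "graph_connected n G" and n: "0 < n"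
    and P: "\<Union>P = {1..n}" "disjoint P"
      "\<And>Q x y. Q \<in> P \<Longrightarrow> x \<in> Q \<Longrightarrow> y \<in> Q \<Longrightarrow> reach_within G x y (4 * a)"
    and W: "1 \<le> W" "real W \<le> n / 128" and T: "n / 128 \<le> 2 ^ T * real W"
    and no_stall: "\<And>u i. u \<in> {1..n} \<Longrightarrow> i < T + 65 \<Longrightarrow>
                     \<not> case_prod (stalls n W P R) (explore P (start_pieces G P W u) R i)"
  shows "\<exists>k. graph_diam n (G \<union> R) = enat k \<and> k \<le> 2 * (W + 4 * a + (T + 65) * (4 * a + 1))"
proof -
  define D where "D = W + 4 * a + (T + 65) * (4 * a + 1)"
  define U where "U = (\<lambda>u. \<Union>(fst (explore P (start_pieces G P W u) R (T + 65))))"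
  have SP: "start_pieces G P W u \<subseteq> P" for u by (auto simp: start_pieces_def)
  have U: "U u \<subseteq> {1..n}" for u
  proof -
    have "fst (explore P (start_pieces G P W u) R (T + 65)) \<subseteq> P"
      using explore_subset[OF SP, where R = R and i = "T + 65"] by (metis prod.collapse)
    thus ?thesis using P(1) unfolding U_def by blast
  qed
  have big: "n / 2 < real (card (U u))" if "u \<in> {1..n}" for u
    unfolding U_def
  proof (rule explore_covers_half[OF P(2) _ SP n W _ T no_stall[OF that]])
    show "finite (\<Union>P)" using P(1) by simp
    show "W \<le> card (\<Union>(start_pieces G P W u))"
      using card_start_pieces_ge[OF G that P(1)] W(2) by simp
  qed
  have reach: "reach_within (G \<union> R) u y D" if y: "y \<in> U u" for u y
  proof -
    obtain Q where Q: "Q \<in> fst (explore P (start_pieces G P W u) R (T + 65))" "y \<in> Q"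
      using y unfolding U_def by blast
    have "explore P (start_pieces G P W u) R (T + 65) =
            (fst (explore P (start_pieces G P W u) R (T + 65)), snd (explore P (start_pieces G P W u) R (T + 65)))"
      by simp
    from explore_reach_within[OF start_pieces_def P(3) this Q] show ?thesis by (simp add: D_def)
  qed
  have "reach_within (G \<union> R) u v (2 * D)" if "u \<in> {1..n}" "v \<in> {1..n}" for u v
  proof -
    have "card (U u \<union> U v) \<le> n" using U card_mono[of "{1..n}" "U u \<union> U v"] by simp
    hence "U u \<inter> U v \<noteq> {}"
      using big[OF that(1)] big[OF that(2)] card_Un_disjoint[of "U u" "U v"] U
      by (auto intro: finite_subset)
    then obtain y where "y \<in> U u" "y \<in> U v" by blast
    hence "reach_within (G \<union> R) u y D" "reach_within (G \<union> R) y v D"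
      using reach reach_within_sym by blast+
    thus ?thesis using reach_within_trans[of "G \<union> R" u y D v D] by (simp add: mult_2)
  qed
  thus ?thesis using graph_diam_le unfolding D_def by blast
qed

lemma prob_diam_le:
  fixes n a W T :: nat and \<epsilon> :: real
  assumes G: "is_graph n G" "graph_connected n G"
    and eps: "0 < \<epsilon>" "64 \<le> \<epsilon> * a" "\<epsilon> \<le> n" and a: "0 < a" "a < n"
    and W: "1 \<le> W" "real W \<le> n / 128" and T: "n / 128 \<le> 2 ^ T * real W"
  shows "1 - n * (T + 65) * exp (- min (\<epsilon> * W / 128) (n / (64 * a)))
           \<le> measure_pmf.prob (gnp n (\<epsilon> / n))
               {R. \<exists>k. graph_diam n (G \<union> R) = enat k \<and> k \<le> 2 * (W + 4 * a + (T + 65) * (4 * a + 1))}"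
proof -
  let ?M = "gnp n (\<epsilon> / n)"
  let ?\<delta> = "exp (- min (\<epsilon> * W / 128) (n / (64 * a)))"
  have n: "0 < n" using a by simp
  have G': "G \<subseteq> all_edges n" using G(1) by (simp add: is_graph_def)
  obtain P where P: "finite P" "\<Union>P = {1..n}" "disjoint P" "\<And>Q. Q \<in> P \<Longrightarrow> card Q \<le> a"
    "\<And>Q x y. Q \<in> P \<Longrightarrow> x \<in> Q \<Longrightarrow> y \<in> Q \<Longrightarrow> reach_within G x y (4 * a)" "card P * a \<le> 2 * n"
    using exists_pieces[OF G' G(2) a] by blast
  have "real (card P) * a \<le> 2 * real n" using P(6) by (metis of_nat_le_iff of_nat_mult of_nat_numeral)
  hence few: "real (card P) \<le> 2 * real n / a" using a by (simp add: field_simps)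
  define Bad where "Bad = (\<Union>u\<in>{1..n}. \<Union>i\<in>{..<T + 65}.
                            {R. case_prod (stalls n W P R) (explore P (start_pieces G P W u) R i)})"
  have "measure_pmf.prob ?M Bad \<le> (\<Sum>u\<in>{1..n}. \<Sum>i\<in>{..<T + 65}.
          measure_pmf.prob ?M {R. case_prod (stalls n W P R) (explore P (start_pieces G P W u) R i)})"
    unfolding Bad_def
    by (rule order_trans[OF measure_pmf.finite_measure_subadditive_finite sum_mono])
       (auto intro: measure_pmf.finite_measure_subadditive_finite)
  also have "\<dots> \<le> (\<Sum>u\<in>{1..n}. \<Sum>i\<in>{..<T + 65}. ?\<delta>)"
    using prob_explore_stalls[OF n a(1) eps P(2,3) _ few] P(4)
    by (intro sum_mono) (auto simp: start_pieces_def)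
  finally have "measure_pmf.prob ?M Bad \<le> n * (T + 65) * ?\<delta>" by simp
  hence "1 - n * (T + 65) * ?\<delta> \<le> measure_pmf.prob ?M (UNIV - Bad)"
    using measure_pmf.prob_compl[of Bad ?M] by simp
  also have "\<dots> \<le> measure_pmf.prob ?M
               {R. \<exists>k. graph_diam n (G \<union> R) = enat k \<and> k \<le> 2 * (W + 4 * a + (T + 65) * (4 * a + 1))}"
    using diam_le_if_no_stall[OF G' G(2) n P(2,3,5) W T]
    by (intro measure_pmf.finite_measure_mono) (auto simp: Bad_def)
  finally show ?thesis .
qed

section \<open>Choosing the parameters\<close>

lemma eventually_mult_ln_le: "eventually (\<lambda>n. K * ln (real n) \<le> real n) sequentially"
proof -
  have "((\<lambda>n::nat. ln (real n) / real n) \<longlongrightarrow> 0) sequentially" by real_asymp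
  hence "eventually (\<lambda>n. \<bar>ln (real n) / real n\<bar> < 1 / (\<bar>K\<bar> + 1)) sequentially"
    by (rule order_tendstoD(2)[OF tendsto_rabs_zero]) simp
  moreover have "eventually (\<lambda>n::nat. n \<ge> 1) sequentially" by (rule eventually_ge_at_top)
  ultimately show ?thesis
  proof eventually_elim
    case (elim n)
    hence "(\<bar>K\<bar> + 1) * \<bar>ln (real n)\<bar> \<le> real n" by (simp add: field_simps abs_divide)
    moreover have "K * ln (real n) \<le> (\<bar>K\<bar> + 1) * \<bar>ln (real n)\<bar>"
      by (rule order_trans[OF abs_ge_self]) (simp add: abs_mult mult_right_mono)
    ultimately show ?case by linarith
  qed
qed

lemma eventually_ge_ln: "eventually (\<lambda>n. K \<le> ln (real n)) sequentially"
proof -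
  have "filterlim (\<lambda>n::nat. ln (real n)) at_top sequentially" by real_asymp
  thus ?thesis by (simp add: filterlim_at_top)
qed

lemma failure_bound_le:
  fixes n T :: nat and x y :: real
  assumes "1 \<le> n" "3 * ln n \<le> x" "3 * ln n \<le> y" "T \<le> log 2 n + 1"
  shows "n * (T + 65) * exp (- min x y) \<le> (log 2 n + 66) / real n ^ 2"
proof -
  have "exp (- min x y) \<le> exp (- (3 * ln n))" using assms(2,3) by simp
  also have "\<dots> = 1 / exp (ln n) ^ 3" using exp_of_nat_mult[of 3 "ln n"] by (simp add: exp_minus inverse_eq_divide)
  also have "\<dots> = 1 / real n ^ 3" using assms(1) by simp
  finally have "n * (T + 65) * exp (- min x y) \<le> n * (T + 65) * (1 / real n ^ 3)"
    by (intro mult_left_mono) auto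
  also have "\<dots> = (T + 65) / real n ^ 2" using assms(1) by (simp add: power2_eq_square power3_eq_cube)
  also have "\<dots> \<le> (log 2 n + 66) / real n ^ 2" using assms(4) by (intro divide_right_mono) auto
  finally show ?thesis .
qed

lemma diam_bound_le:
  fixes W T a :: nat and \<epsilon> L :: real
  assumes "0 \<le> L" "W \<le> 384 / \<epsilon> * L + 2" "T \<le> L / ln 2 + 1" "4 + 8 * a + 132 * (4 * a + 1) \<le> L"
  shows "2 * (W + 4 * a + (T + 65) * (4 * a + 1)) \<le> (768 / \<epsilon> + 2 * (4 * a + 1) / ln 2 + 1) * L"
proof -
  have "real (2 * (W + 4 * a + (T + 65) * (4 * a + 1))) =
          2 * W + 8 * real a + 2 * (T + 65) * (4 * real a + 1)"
    by (simp add: algebra_simps)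
  also have "\<dots> \<le> 2 * (384 / \<epsilon> * L + 2) + 8 * real a + 2 * (L / ln 2 + 1 + 65) * (4 * real a + 1)"
    using assms(2,3) by (intro add_mono mult_right_mono mult_left_mono) auto
  also have "\<dots> = (768 / \<epsilon> + 2 * (4 * real a + 1) / ln 2) * L + (4 + 8 * a + 132 * (4 * a + 1))"
    by (simp add: field_simps)
  also have "\<dots> \<le> (768 / \<epsilon> + 2 * (4 * a + 1) / ln 2 + 1) * L" using assms(4) by (simp add: algebra_simps)
  finally show ?thesis by simp
qed

text \<open>The parameters: seed radius \<open>W \<approx> (384/\<epsilon>) ln n\<close>, so that a stall has probability at most
  \<open>n\<^sup>-\<^sup>3\<close>, and \<open>\<lceil>log\<^sub>2 n\<rceil> + 65\<close> rounds.\<close>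

lemma eventually_prob_diam_le_log:
  fixes \<epsilon> :: real and a :: nat
  assumes eps: "0 < \<epsilon>" "64 \<le> \<epsilon> * a" and a: "0 < a"
    and G: "\<forall>n. is_graph n (G n) \<and> graph_connected n (G n)"
  shows "eventually (\<lambda>n. 1 - (log 2 n + 66) / real n ^ 2 \<le> measure_pmf.prob (gnp n (\<epsilon> / n))
           {R. \<exists>k. graph_diam n (G n \<union> R) = enat k \<and>
                   k \<le> (768 / \<epsilon> + 2 * (4 * a + 1) / ln 2 + 1) * ln n}) sequentially"
  using eventually_ge_at_top[of "max 512 (max (Suc a) (nat \<lceil>\<epsilon>\<rceil>))"]
    eventually_mult_ln_le[of "2 * 128 * 384 / \<epsilon>"] eventually_mult_ln_le[of "192 * real a"]
    eventually_ge_ln[of "4 + 8 * a + 132 * (4 * a + 1)"]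
proof eventually_elim
  case (elim n)
  define L where "L = ln (real n)"
  define W where "W = nat \<lceil>384 / \<epsilon> * L\<rceil> + 1"
  define T where "T = nat \<lceil>log 2 n\<rceil>"
  have n: "512 \<le> n" "a < n" "\<epsilon> \<le> n" using elim(1) real_nat_ceiling_ge[of \<epsilon>] by auto
  have "0 \<le> L" using n by (simp add: L_def)
  have W_ge: "384 / \<epsilon> * L \<le> W" "1 \<le> W" using real_nat_ceiling_ge[of "384 / \<epsilon> * L"] by (auto simp: W_def)
  have W_le: "W \<le> 384 / \<epsilon> * L + 2"
    using \<open>0 \<le> L\<close> eps by (simp add: W_def of_nat_int_ceiling)
      (use of_int_ceiling_le_add_one[of "384 * L / \<epsilon>"] in linarith)
  have "384 / \<epsilon> * L \<le> n / 256" using elim(2) by (simp add: L_def field_simps)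
  hence "W \<le> n / 128" using W_le n by linarith
  have "log 2 n \<le> T" unfolding T_def by (rule real_nat_ceiling_ge)
  hence "real n \<le> 2 ^ T" using n by (simp add: log_le_iff powr_realpow)
  moreover have "(2::real) ^ T * 1 \<le> 2 ^ T * real W" using W_ge(2) by (intro mult_left_mono) auto
  ultimately have T_ge: "n / 128 \<le> 2 ^ T * real W" by linarith
  have "T \<le> log 2 n + 1" using n by (simp add: T_def of_nat_int_ceiling)
  hence T_le: "T \<le> L / ln 2 + 1" by (simp add: L_def log_def)
  have "1 - (log 2 n + 66) / real n ^ 2 \<le> 1 - n * (T + 65) * exp (- min (\<epsilon> * W / 128) (n / (64 * a)))"
    using failure_bound_le[of n "\<epsilon> * W / 128" "n / (64 * a)" T] W_ge eps elim(3) a n \<open>T \<le> log 2 n + 1\<close>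
    by (simp add: L_def field_simps)
  also have "\<dots> \<le> measure_pmf.prob (gnp n (\<epsilon> / n))
      {R. \<exists>k. graph_diam n (G n \<union> R) = enat k \<and> k \<le> 2 * (W + 4 * a + (T + 65) * (4 * a + 1))}"
    using prob_diam_le[OF _ _ eps(1,2) n(3) a n(2) W_ge(2) \<open>W \<le> n / 128\<close> T_ge] G by blast
  also have "\<dots> \<le> measure_pmf.prob (gnp n (\<epsilon> / n))
      {R. \<exists>k. graph_diam n (G n \<union> R) = enat k \<and> k \<le> (768 / \<epsilon> + 2 * (4 * a + 1) / ln 2 + 1) * ln n}"
  proof (intro measure_pmf.finite_measure_mono subsetI)
    fix R assume "R \<in> {R. \<exists>k. graph_diam n (G n \<union> R) = enat k \<and> k \<le> 2 * (W + 4 * a + (T + 65) * (4 * a + 1))}"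
    then obtain k where k: "graph_diam n (G n \<union> R) = enat k" "k \<le> 2 * (W + 4 * a + (T + 65) * (4 * a + 1))"
      by blast
    hence "real k \<le> real (2 * (W + 4 * a + (T + 65) * (4 * a + 1)))" by (simp only: of_nat_le_iff)
    also have "\<dots> \<le> (768 / \<epsilon> + 2 * (4 * a + 1) / ln 2 + 1) * ln n"
      using diam_bound_le[OF \<open>0 \<le> L\<close> W_le T_le elim(4)[folded L_def]] by (simp add: L_def)
    finally show "R \<in> {R. \<exists>k. graph_diam n (G n \<union> R) = enat k \<and>
                   k \<le> (768 / \<epsilon> + 2 * (4 * a + 1) / ln 2 + 1) * ln n}" using k(1) by blast
  qed simp
  finally show ?case .
qed

theorem theorem4:
  fixes \<epsilon> :: real
  assumes "\<epsilon> > 0"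
  shows "\<exists>C>0. \<forall>G :: nat \<Rightarrow> nat set set.
           (\<forall>n. is_graph n (G n) \<and> graph_connected n (G n)) \<longrightarrow>
           ((\<lambda>n. measure_pmf.prob (gnp n (\<epsilon> / real n))
                  {R. \<exists>k. graph_diam n (G n \<union> R) = enat k \<and> real k \<le> C * ln (real n)})
             \<longlonglongrightarrow> 1)"
proof -
  define a where "a = nat \<lceil>64 / \<epsilon>\<rceil>"
  have "64 / \<epsilon> \<le> a" unfolding a_def by (rule real_nat_ceiling_ge)
  moreover have "0 < 64 / \<epsilon>" using assms by simp
  ultimately have a: "0 < a" "64 \<le> \<epsilon> * a" using assms by (linarith, simp add: field_simps)
  define C where "C = 768 / \<epsilon> + 2 * (4 * a + 1) / ln 2 + 1"
  have "C > 0" unfolding C_def using assms by (simp add: add_pos_pos)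
  have "(\<lambda>n. (log 2 (real n) + 66) / real n ^ 2) \<longlonglongrightarrow> 0" by real_asymp
  hence lim: "(\<lambda>n. 1 - (log 2 (real n) + 66) / real n ^ 2) \<longlonglongrightarrow> 1"
    using tendsto_diff[OF tendsto_const, of _ 0 sequentially 1] by simp
  have "((\<lambda>n. measure_pmf.prob (gnp n (\<epsilon> / real n))
                  {R. \<exists>k. graph_diam n (G n \<union> R) = enat k \<and> real k \<le> C * ln (real n)}) \<longlonglongrightarrow> 1)"
    if "\<forall>n. is_graph n (G n) \<and> graph_connected n (G n)" for G
    by (rule real_tendsto_sandwich[OF eventually_prob_diam_le_log[OF assms a(2,1) that, folded C_def]
          _ lim tendsto_const]) simp
  thus ?thesis using \<open>C > 0\<close> by blast
qed

end
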